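(* Let $l$ be the intersection of $B^d$ with an affine hyperplane of ${\mathbb R}^d$, and let $h=h_-+(h_+-h_-)\mathbf 1_{l^+}$ be a continuous wedge on $l$ with angle $\alpha>0$. Then $$\mathbf{MM}(h)=\alpha\,\omega_l,$$ where $\omega_l$ is the measure on $B^d$ supported on $l$ given by the volume measure of $l$ for the Riemannian metric induced on $l$ by $g_{{\mathbb H}^d}$ (with which $l$ is isometric to ${\mathbb H}^{d-1}$).
   Context: $B^d$ is the open Euclidean unit ball of ${\mathbb R}^d$, with Euclidean inner product $\langle\cdot,\cdot\rangle_d$ and norm $\|\cdot\|$, $L(x)=\sqrt{1-\|x\|^2}$, and $g_{{\mathbb H}^d}(x)(X,Y)=L(x)^{-2}\langle X,Y\rangle_d+L(x)^{-4}\langle x,X\rangle_d\langle x,Y\rangle_d$ is the Klein hyperbolic metric on $B^d$. Wedges. Let $l$ be the intersection of $B^d$ with an affine hyperplane of ${\mathbb R}^d$; it separates $B^d$ into two components, $l^-$ the one containing $0$ (chosen arbitrarily if $0\in l$) and $l^+$ the other. Let $p_l$ be the Euclidean orthogonal projection of $0$ onto $l$ and $n_l=p_l/\|p_l\|$ (if $0\in l$, $n_l$ is the Euclidean unit normal to $l$ pointing into $l^+$). The canonical map of $l$ is $h_l(x)=\frac{1}{L(p_l)}\langle x-p_l,n_l\rangle_d$. A wedge on $l$ is a continuous map $h=h_-+(h_+-h_-)\mathbf 1_{l^+}$ with $h_-,h_+$ affine functions (agreeing on $l$); its angle is the unique real $\alpha$ with $h_+-h_-=\alpha h_l$. Mean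 curvature measure. For convex $h:B^d\to{\mathbb R}$, its second distributional derivatives $\partial_{ij}h$ are Radon measures on $B^d$, and $\mathbf{MM}(h)$ is the Radon measure $L(x)^{-d}\sum_{i,j=1}^d(\delta_{ij}-x_ix_j)\,\partial_{ij}h$. *)

theory Defs
  imports "HOL-Analysis.Analysis"
begin

text \<open>Ambient space R^d is rendered as real^'n (d = CARD('n)); B^d = ball 0 1.\<close>

definition L :: "real^'n \<Rightarrow> real" where
  "L x = sqrt (1 - (norm x)\<^sup>2)"

text \<open>Matrix of the Klein metric at x:  g(X,Y) = X . (G x *v Y).\<close>
definition klein_matrix :: "real^'n \<Rightarrow> real^'n^'n" where
  "klein_matrix x = (\<chi> i j. (if i = j then 1 else 0) / (L x)\<^sup>2 + x$i * x$j / (L x) ^ 4)"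

text \<open>A hyperplane section l of the ball is given by data (u, c) with u \<noteq> 0:
  l = ball 0 1 \<inter> {x. u . x = c}.\<close>
definition hsec :: "real^'n \<Rightarrow> real \<Rightarrow> (real^'n) set" where
  "hsec u c = ball 0 1 \<inter> {x. u \<bullet> x = c}"

text \<open>p_l: Euclidean orthogonal projection of 0 onto l.\<close>
definition hsec_p :: "real^'n \<Rightarrow> real \<Rightarrow> real^'n" where
  "hsec_p u c = (c / (norm u)\<^sup>2) *\<^sub>R u"

text \<open>n_l = p_l/|p_l|; if 0 \<in> l (c = 0) the side l^+ is the one u points into
  (the arbitrary choice is covered by replacing u with -u).\<close>
definition hsec_n :: "real^'n \<Rightarrow> real \<Rightarrow> real^'n" where
  "hsec_n u c = (if c = 0 then (1 / norm u) *\<^sub>R u else (1 / norm (hsec_p u c)) *\<^sub>R hsec_p u c)"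

text \<open>l^+: the component of B^d - l not containing 0.\<close>
definition hsec_plus :: "real^'n \<Rightarrow> real \<Rightarrow> (real^'n) set" where
  "hsec_plus u c = ball 0 1 \<inter> {x. hsec_n u c \<bullet> x > hsec_n u c \<bullet> hsec_p u c}"

definition hsec_canon :: "real^'n \<Rightarrow> real \<Rightarrow> real^'n \<Rightarrow> real" where
  "hsec_canon u c x = (1 / L (hsec_p u c)) * ((x - hsec_p u c) \<bullet> hsec_n u c)"

definition affine_fun :: "(real^'n \<Rightarrow> real) \<Rightarrow> bool" where
  "affine_fun f \<longleftrightarrow> (\<exists>a b. \<forall>x. f x = a \<bullet> x + b)"

definition is_wedge ::
  "real^'n \<Rightarrow> real \<Rightarrow> (real^'n \<Rightarrow> real) \<Rightarrow> (real^'n \<Rightarrow> real) \<Rightarrow> (real^'n \<Rightarrow> real) \<Rightarrow> real \<Rightarrow> bool" where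
  "is_wedge u c h hm hp \<alpha> \<longleftrightarrow>
     affine_fun hm \<and> affine_fun hp \<and>
     (\<forall>x \<in> hsec u c. hm x = hp x) \<and>
     continuous_on (ball 0 1) h \<and>
     (\<forall>x \<in> ball 0 1. h x = hm x + (hp x - hm x) * indicator (hsec_plus u c) x) \<and>
     (\<forall>x \<in> ball 0 1. hp x - hm x = \<alpha> * hsec_canon u c x)"

text \<open>(d-1)-dimensional Euclidean (Lebesgue/Hausdorff) measure on the affine
  hyperplane {y. n . y = c}, n a unit vector: the measure of A is the Lebesgue
  measure of the unit-height cylinder over A along n (Fubini).\<close>
definition hyperplane_measure :: "real^'n \<Rightarrow> real \<Rightarrow> (real^'n) measure" where
  "hyperplane_measure n c = measure_of UNIV (sets borel)
     (\<lambda>A. emeasure lborel {y + t *\<^sub>R n | y t. y \<in> A \<and> n \<bullet> y = c \<and> t \<in> {0..1}})"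

definition perp_proj :: "real^'n \<Rightarrow> real^'n^'n" where
  "perp_proj n = (\<chi> i j. (if i = j then 1 else 0) - n$i * n$j)"

text \<open>Riemannian volume density of the metric induced by the Klein metric on the
  hyperplane with unit normal n, relative to Euclidean hypersurface measure:
  sqrt of the Gram determinant of g_x restricted to n^\<bottom> in an orthonormal basis,
  computed as det (P G P + n n^T), which is block-diagonal (G|n^\<bottom>, 1) in an
  orthonormal basis adapted to n^\<bottom> \<oplus> R n.\<close>
definition induced_vol_density :: "real^'n \<Rightarrow> real^'n \<Rightarrow> real" where
  "induced_vol_density n x =
     sqrt (det (perp_proj n ** klein_matrix x ** perp_proj n + (\<chi> i j. n$i * n$j)))"

definition omega :: "real^'n \<Rightarrow> real \<Rightarrow> (real^'n) measure" where
  "omega u c = density (hyperplane_measure (hsec_n u c) (hsec_n u c \<bullet> hsec_p u c))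
      (\<lambda>x. indicator (hsec u c) x * ennreal (induced_vol_density (hsec_n u c) x))"

definition partial :: "'n \<Rightarrow> (real^'n \<Rightarrow> real) \<Rightarrow> real^'n \<Rightarrow> real" where
  "partial i f x = deriv (\<lambda>t. f (x + t *\<^sub>R axis i 1)) 0"

fun iter_partial :: "'n list \<Rightarrow> (real^'n \<Rightarrow> real) \<Rightarrow> real^'n \<Rightarrow> real" where
  "iter_partial [] f = f"
| "iter_partial (i # is) f = partial i (iter_partial is f)"

definition smooth_fun :: "(real^'n \<Rightarrow> real) \<Rightarrow> bool" where
  "smooth_fun f \<longleftrightarrow> (\<forall>is. continuous_on UNIV (iter_partial is f) \<and>
      (\<forall>i x. (\<lambda>t. iter_partial is f (x + t *\<^sub>R axis i 1)) differentiable (at 0)))"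

definition test_fun :: "(real^'n \<Rightarrow> real) \<Rightarrow> bool" where
  "test_fun \<phi> \<longleftrightarrow> smooth_fun \<phi> \<and> compact (closure {x. \<phi> x \<noteq> 0}) \<and>
      closure {x. \<phi> x \<noteq> 0} \<subseteq> ball 0 1"

definition mm_coeff :: "'n \<Rightarrow> 'n \<Rightarrow> real^'n \<Rightarrow> real" where
  "mm_coeff i j x = ((if i = j then 1 else 0) - x$i * x$j) / (L x) ^ CARD('n)"

text \<open>Pairing of the distribution \<Sum>_ij mm_coeff_ij \<partial>_ij h with a test function \<phi>:
  \<Sum>_ij \<langle>\<partial>_ij h, mm_coeff_ij \<phi>\<rangle> = \<Sum>_ij \<integral>_B h \<partial>_ij (mm_coeff_ij \<phi>) dx.\<close>
definition mm_pairing :: "(real^'n \<Rightarrow> real) \<Rightarrow> (real^'n \<Rightarrow> real) \<Rightarrow> real" where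
  "mm_pairing h \<phi> = (\<Sum>i\<in>UNIV. \<Sum>j\<in>UNIV.
      LINT x : ball 0 1 | lborel. h x * iter_partial [i, j] (\<lambda>y. mm_coeff i j y * \<phi> y) x)"

text \<open>\<mu> is the mean curvature measure MM(h): a Radon measure on B^d (Borel, carried
  by B^d, finite on compact subsets of B^d) representing the distribution above.\<close>
definition is_MM :: "(real^'n \<Rightarrow> real) \<Rightarrow> (real^'n) measure \<Rightarrow> bool" where
  "is_MM h \<mu> \<longleftrightarrow> sets \<mu> = sets borel \<and> emeasure \<mu> (- ball 0 1) = 0 \<and>
     (\<forall>K. compact K \<and> K \<subseteq> ball 0 1 \<longrightarrow> emeasure \<mu> K < \<infinity>) \<and>
     (\<forall>\<phi>. test_fun \<phi> \<longrightarrow> integrable \<mu> \<phi> \<and> integral\<^sup>L \<mu> \<phi> = mm_pairing h \<phi>)"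

end

theory Submission
  imports Defs
begin

text \<open>On the ball a wedge is an affine function plus \<open>\<beta> max (n \<bullet> x - s) 0\<close>, where \<open>n\<close> is the
  unit normal of \<open>l\<close>, \<open>s\<close> its distance from the origin and \<open>\<beta> = \<alpha> / L p\<close>. Pairing
  \<open>\<Sum>\<^sub>i\<^sub>j L\<^sup>-\<^sup>d (\<delta>\<^sub>i\<^sub>j - x\<^sub>i x\<^sub>j) \<partial>\<^sub>i\<^sub>j h\<close> with a test function \<open>\<phi>\<close> and integrating by parts
  twice along coordinate lines, the affine part drops out and the ramp leaves
  \<open>\<beta> \<integral>\<^sub>l (1 - (n \<bullet> x)\<^sup>2) L\<^sup>-\<^sup>d \<phi> d\<sigma> = \<beta> (1 - s\<^sup>2) \<integral>\<^sub>l L\<^sup>-\<^sup>d \<phi> d\<sigma>\<close>, with \<open>\<sigma>\<close> the Euclidean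
  hypersurface measure. On the other side, the Gram determinant of the Klein metric restricted
  to \<open>l\<close> is \<open>(1 - s\<^sup>2) / L\<^sup>2\<^sup>d\<close>, so \<open>\<omega>\<^sub>l = \<surd>(1 - s\<^sup>2) L\<^sup>-\<^sup>d \<sigma>\<close>; as \<open>L p = \<surd>(1 - s\<^sup>2)\<close>, the
  two measures agree.\<close>

definition outer_prod :: "real^'n \<Rightarrow> real^'n \<Rightarrow> real^'n^'n" where
  "outer_prod u v = (\<chi> i j. u$i * v$j)"

lemma det_identity_row_replaced:
  fixes v :: "real^'n"
  shows "det ((\<chi> i. if i = k then v else axis i 1) :: real^'n^'n) = v$k"
proof -
  let ?A = "(\<chi> i. if i = k then v$k *s axis k 1 else axis i 1) :: real^'n^'n"
  have det_A: "det ?A = v$k"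
  proof -
    have "det ?A = v$k * det ((\<chi> i. if i = k then axis k 1 else axis i 1) :: real^'n^'n)"
      by (rule det_row_mul)
    also have "((\<chi> i. if i = k then axis k 1 else axis i 1) :: real^'n^'n) = mat 1"
      by (simp add: vec_eq_iff mat_def axis_def)
    finally show ?thesis by simp
  qed
  have "v = (\<Sum>j\<in>UNIV. v$j *s axis j 1)"
  proof -
    have "(\<Sum>x\<in>UNIV. v $ x * (if i = x then 1 else 0)) = (\<Sum>x\<in>UNIV. if i = x then v$x else 0)" for i
      by (rule sum.cong) auto
    then show ?thesis by (simp add: vec_eq_iff sum_component axis_def)
  qed
  also have "\<dots> = v$k *s axis k 1 + (\<Sum>j\<in>UNIV - {k}. v$j *s axis j 1)"
    by (simp add: sum.remove)
  finally have "v - v$k *s axis k 1 = (\<Sum>j\<in>UNIV - {k}. v$j *s axis j 1)"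
    by (simp add: diff_eq_eq add.commute)
  also have "\<dots> \<in> vec.span {row j ?A |j. j \<noteq> k}"
  proof (rule vec.span_sum)
    fix j assume "j \<in> UNIV - {k}"
    then have "axis j 1 \<in> {row j ?A |j. j \<noteq> k}"
      by (auto simp: row_def)
    then show "v$j *s axis j 1 \<in> vec.span {row j ?A |j. j \<noteq> k}"
      by (simp add: vec.span_base vec.span_scale)
  qed
  finally have "det (\<chi> i. if i = k then row k ?A + (v - v$k *s axis k 1) else row i ?A) = det ?A"
    by (rule det_row_span)
  moreover have "(\<chi> i. if i = k then row k ?A + (v - v$k *s axis k 1) else row i ?A) =
      ((\<chi> i. if i = k then v else axis i 1) :: real^'n^'n)"
    by (simp add: vec_eq_iff row_def)
  ultimately show ?thesis using det_A by simp
qed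

lemma det_rank_one_rows_row_replaced:
  fixes u v :: "real^'n"
  assumes "finite T" "k \<notin> T"
  shows "det ((\<chi> i. if i = k then v else if i \<in> T then u$i *s v + axis i 1 else axis i 1) :: real^'n^'n) = v$k"
  using assms
proof (induction T rule: finite_induct)
  case empty
  have "((\<chi> i. if i = k then v else if i \<in> {} then u$i *s v + axis i 1 else axis i 1) :: real^'n^'n)
     = (\<chi> i. if i = k then v else axis i 1)" by (simp add: vec_eq_iff)
  then show ?case using det_identity_row_replaced[of k v] by simp
next
  case (insert j T)
  define r where "r = (\<lambda>i. if i = k then v else if i \<in> T then u$i *s v + axis i 1 else axis i 1)"
  have jk: "j \<noteq> k" using insert by auto
  have "((\<chi> i. if i = k then v else if i \<in> insert j T then u$i *s v + axis i 1 else axis i 1) :: real^'n^'n)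
      = (\<chi> i. if i = j then u$j *s v + axis j 1 else r i)"
    using jk by (simp add: vec_eq_iff r_def)
  moreover have "det ((\<chi> i. if i = j then u$j *s v + axis j 1 else r i) :: real^'n^'n)
      = u$j * det ((\<chi> i. if i = j then v else r i) :: real^'n^'n)
       + det ((\<chi> i. if i = j then axis j 1 else r i) :: real^'n^'n)"
    by (simp add: det_row_add det_row_mul)
  moreover have "det ((\<chi> i. if i = j then v else r i) :: real^'n^'n) = 0"
    by (rule det_identical_rows[OF jk]) (use jk in \<open>simp add: row_def vec_eq_iff r_def\<close>)
  moreover have "((\<chi> i. if i = j then axis j 1 else r i) :: real^'n^'n) = (\<chi> i. r i)"
    using jk insert by (auto simp: vec_eq_iff r_def)
  ultimately show ?case using insert by (simp add: r_def)
qed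

lemma det_rank_one_rows:
  fixes u v :: "real^'n"
  assumes "finite T"
  shows "det ((\<chi> i. if i \<in> T then u$i *s v + axis i 1 else axis i 1) :: real^'n^'n) = 1 + (\<Sum>i\<in>T. u$i * v$i)"
  using assms
proof (induction T rule: finite_induct)
  case empty
  have "((\<chi> i. if i \<in> {} then u$i *s v + axis i 1 else axis i 1) :: real^'n^'n) = mat 1"
    by (simp add: vec_eq_iff mat_def axis_def)
  then show ?case by simp
next
  case (insert k T)
  define r where "r = (\<lambda>i. if i \<in> T then u$i *s v + axis i 1 else axis i 1)"
  have "((\<chi> i. if i \<in> insert k T then u$i *s v + axis i 1 else axis i 1) :: real^'n^'n)
      = (\<chi> i. if i = k then u$k *s v + axis k 1 else r i)"
    by (simp add: vec_eq_iff r_def)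
  moreover have "det ((\<chi> i. if i = k then u$k *s v + axis k 1 else r i) :: real^'n^'n)
      = u$k * det ((\<chi> i. if i = k then v else r i) :: real^'n^'n)
       + det ((\<chi> i. if i = k then axis k 1 else r i) :: real^'n^'n)"
    by (simp add: det_row_add det_row_mul)
  moreover have "det ((\<chi> i. if i = k then v else r i) :: real^'n^'n) = v$k"
    unfolding r_def by (rule det_rank_one_rows_row_replaced) (use insert in auto)
  moreover have "((\<chi> i. if i = k then axis k 1 else r i) :: real^'n^'n) = (\<chi> i. r i)"
    using insert by (auto simp: vec_eq_iff r_def)
  ultimately show ?case using insert by (simp add: r_def)
qed

lemma det_identity_plus_outer_prod: "det (mat 1 + outer_prod u v) = 1 + u \<bullet> (v::real^'n)"
proof -
  have "mat 1 + outer_prod u v = ((\<chi> i. if i \<in> UNIV then u$i *s v + axis i 1 else axis i 1) :: real^'n^'n)"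
    by (simp add: vec_eq_iff outer_prod_def mat_def axis_def)
  then show ?thesis using det_rank_one_rows[of UNIV u v] by (simp add: inner_vec_def)
qed

lemma outer_prod_mult_vec: "outer_prod u v *v y = (v \<bullet> y) *\<^sub>R (u::real^'n)"
  by (simp add: vec_eq_iff outer_prod_def matrix_vector_mult_def inner_vec_def sum_distrib_left mult_ac)

lemma det_scaleR_matrix: "det (c *\<^sub>R (X::real^'n^'n)) = c ^ CARD('n) * det X"
proof -
  have "c *\<^sub>R X = (\<chi> i. c *s row i X)" by (simp add: vec_eq_iff row_def)
  then show ?thesis using det_rows_mul[of "\<lambda>_. c" "\<lambda>i. row i X"] by (simp add: row_def)
qed

lemma perp_proj_mult_vec: "perp_proj m *v y = y - (m \<bullet> y) *\<^sub>R (m::real^'n)"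
proof -
  have "perp_proj m = mat 1 - outer_prod m m"
    by (simp add: vec_eq_iff perp_proj_def outer_prod_def mat_def)
  then show ?thesis by (simp add: matrix_vector_mult_diff_rdistrib outer_prod_mult_vec)
qed

lemma klein_matrix_mult_vec:
  "klein_matrix x *v y = (1 / (L x)\<^sup>2) *\<^sub>R y + ((x \<bullet> y) / (L x)^4) *\<^sub>R (x::real^'n)"
proof -
  have "klein_matrix x = (1 / (L x)\<^sup>2) *\<^sub>R mat 1 + (1 / (L x)^4) *\<^sub>R outer_prod x x"
    by (simp add: vec_eq_iff klein_matrix_def outer_prod_def mat_def)
  then show ?thesis
    by (simp add: matrix_vector_mult_add_rdistrib outer_prod_mult_vec flip: scaleR_matrix_vector_assoc)
qed

text \<open>Factoring the Gram matrix into rank-one updates of the identity makes its determinant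
  computable.\<close>
lemma induced_gram_matrix_factor:
  fixes m x w :: "real^'n"
  assumes m: "norm m = 1" and x_on_plane: "m \<bullet> x = s" and x_in_ball: "norm x < 1"
    and l: "l = 1 - (norm x)\<^sup>2" and w: "w = x - s *\<^sub>R m"
  shows "perp_proj m ** klein_matrix x ** perp_proj m + (\<chi> i j. m$i * m$j)
    = ((1 / l) *\<^sub>R (mat 1 + outer_prod ((l - 1) *\<^sub>R m) m)) ** (mat 1 + outer_prod ((1 / l) *\<^sub>R w) w)"
    (is "?G = ?A ** ?B")
proof (subst matrix_eq, intro allI)
  fix y :: "real^'n"
  have l_pos: "l > 0" using x_in_ball by (simp add: l abs_square_less_1)
  have L2: "(L x)\<^sup>2 = l" using l_pos by (simp add: L_def l)
  have "(L x)^4 = ((L x)\<^sup>2)\<^sup>2" by (simp flip: power_mult)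
  then have L4: "(L x)^4 = l\<^sup>2" using L2 by simp
  have mm: "m \<bullet> m = 1" using m by (simp add: dot_square_norm)
  have mw: "m \<bullet> w = 0" by (simp add: w inner_diff_right x_on_plane mm)
  have "?G *v y = perp_proj m *v (klein_matrix x *v (perp_proj m *v y)) + (m \<bullet> y) *\<^sub>R m"
    by (simp add: matrix_vector_mult_add_rdistrib outer_prod_def[symmetric] outer_prod_mult_vec
        flip: matrix_vector_mul_assoc)
  also have "\<dots> = (1/l) *\<^sub>R y + ((w \<bullet> y) / l\<^sup>2) *\<^sub>R w + ((l - 1) / l * (m \<bullet> y)) *\<^sub>R m"
    using l_pos mm x_on_plane
    by (simp add: perp_proj_mult_vec klein_matrix_mult_vec L2 L4 w inner_diff_right
          inner_diff_left inner_commute algebra_simps field_simps scaleR_diff_right)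
      (simp add: vec_eq_iff, simp add: field_simps power2_eq_square)
  also have "\<dots> = (?A ** ?B) *v y"
    using l_pos mm mw
    by (simp add: outer_prod_mult_vec matrix_vector_mult_add_rdistrib inner_add_right
        flip: matrix_vector_mul_assoc scaleR_matrix_vector_assoc)
      (simp add: algebra_simps field_simps inner_commute, simp add: vec_eq_iff,
        simp add: field_simps power2_eq_square)
  finally show "?G *v y = (?A ** ?B) *v y" .
qed

lemma induced_vol_density_eq:
  fixes m x :: "real^'n"
  assumes m: "norm m = 1" and x_on_plane: "m \<bullet> x = s" and x_in_ball: "norm x < 1"
  shows "induced_vol_density m x = sqrt (1 - s\<^sup>2) / (L x) ^ CARD('n)"
proof -
  define l where "l = 1 - (norm x)\<^sup>2"
  define w where "w = x - s *\<^sub>R m"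
  have l_pos: "l > 0" using x_in_ball by (simp add: l_def abs_square_less_1)
  have mm: "m \<bullet> m = 1" using m by (simp add: dot_square_norm)
  have ww: "w \<bullet> w = (norm x)\<^sup>2 - s\<^sup>2"
    by (simp add: w_def inner_diff_left inner_diff_right x_on_plane mm inner_commute power2_eq_square)
      (metis dot_square_norm power2_eq_square)
  have "det (perp_proj m ** klein_matrix x ** perp_proj m + (\<chi> i j. m$i * m$j))
      = (1/l) ^ CARD('n) * l * (1 + (w \<bullet> w) / l)"
    unfolding induced_gram_matrix_factor[OF m x_on_plane x_in_ball l_def w_def] det_mul
      det_scaleR_matrix det_identity_plus_outer_prod
    using mm by simp
  also have "\<dots> = (1 - s\<^sup>2) / l ^ CARD('n)"
    unfolding ww using l_pos by (simp add: l_def field_simps power_divide)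
  finally have "det (perp_proj m ** klein_matrix x ** perp_proj m + (\<chi> i j. m$i * m$j))
      = (1 - s\<^sup>2) / l ^ CARD('n)" .
  moreover have "sqrt (l ^ CARD('n)) = (L x) ^ CARD('n)"
    using l_pos by (simp add: L_def l_def real_sqrt_power)
  ultimately show ?thesis unfolding induced_vol_density_def by (simp add: real_sqrt_divide)
qed

definition hyperplane_proj :: "real^'n \<Rightarrow> real \<Rightarrow> real^'n \<Rightarrow> real^'n" where
  "hyperplane_proj m c x = x - (m \<bullet> x - c) *\<^sub>R m"

definition hyperplane_slab :: "real^'n \<Rightarrow> real \<Rightarrow> (real^'n) set" where
  "hyperplane_slab m c = {x. 0 \<le> m \<bullet> x - c \<and> m \<bullet> x - c \<le> 1}"

lemma hyperplane_slab_borel [measurable]: "hyperplane_slab m c \<in> sets borel"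
  unfolding hyperplane_slab_def by measurable

lemma hyperplane_proj_borel [measurable]: "hyperplane_proj m c \<in> borel_measurable borel"
  unfolding hyperplane_proj_def by measurable

lemma hyperplane_cylinder_eq:
  assumes m: "norm m = 1"
  shows "{y + t *\<^sub>R m |y t. y \<in> A \<and> m \<bullet> y = c \<and> t \<in> {0..1}}
    = hyperplane_proj m c -` A \<inter> hyperplane_slab m c"
proof -
  have mm: "m \<bullet> m = 1" using m by (simp add: dot_square_norm)
  show ?thesis
  proof (intro set_eqI iffI)
    fix x assume "x \<in> {y + t *\<^sub>R m |y t. y \<in> A \<and> m \<bullet> y = c \<and> t \<in> {0..1}}"
    then obtain y t where "x = y + t *\<^sub>R m" "y \<in> A" "m \<bullet> y = c" "t \<in> {0..1}" by blast
    then show "x \<in> hyperplane_proj m c -` A \<inter> hyperplane_slab m c"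
      using mm by (auto simp: hyperplane_proj_def hyperplane_slab_def inner_add_right)
  next
    fix x assume x: "x \<in> hyperplane_proj m c -` A \<inter> hyperplane_slab m c"
    have "x = hyperplane_proj m c x + (m \<bullet> x - c) *\<^sub>R m" "m \<bullet> hyperplane_proj m c x = c"
      using mm by (auto simp: hyperplane_proj_def inner_diff_right)
    then show "x \<in> {y + t *\<^sub>R m |y t. y \<in> A \<and> m \<bullet> y = c \<and> t \<in> {0..1}}"
      using x by (auto simp: hyperplane_slab_def
          intro!: exI[of _ "hyperplane_proj m c x"] exI[of _ "m \<bullet> x - c"])
  qed
qed

lemma emeasure_density_indicator:
  assumes "B \<in> sets borel" "S \<in> sets borel"
  shows "emeasure (density lborel (indicator S)) B = emeasure lborel (B \<inter> (S::'a::euclidean_space set))"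
proof -
  have "emeasure (density lborel (indicator S)) B = (\<integral>\<^sup>+x. indicator S x * indicator B x \<partial>lborel)"
    using assms by (subst emeasure_density) auto
  also have "\<dots> = (\<integral>\<^sup>+x. indicator (B \<inter> S) x \<partial>lborel)"
    by (intro nn_integral_cong) (auto simp: indicator_def)
  also have "\<dots> = emeasure lborel (B \<inter> S)"
    using assms by (intro nn_integral_indicator) auto
  finally show ?thesis .
qed

lemma hyperplane_measure_eq_distr:
  fixes m :: "real^'n"
  assumes m: "norm m = 1"
  shows "hyperplane_measure m c
    = distr (density lborel (indicator (hyperplane_slab m c))) borel (hyperplane_proj m c)"
    (is "_ = ?N")
proof -
  have "hyperplane_measure m c = measure_of UNIV (sets borel) (emeasure ?N)"
    unfolding hyperplane_measure_def
  proof (rule measure_of_eq)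
    fix a :: "(real^'n) set" assume "a \<in> sigma_sets UNIV (sets borel)"
    then have a: "a \<in> sets borel" by (metis sets.sigma_sets_eq space_borel)
    have "hyperplane_proj m c -` a \<in> sets borel"
      using measurable_sets[OF hyperplane_proj_borel a] by simp
    then have "emeasure ?N a = emeasure lborel (hyperplane_proj m c -` a \<inter> hyperplane_slab m c)"
      using a by (simp add: emeasure_distr emeasure_density_indicator)
    then show "emeasure lborel {y + t *\<^sub>R m |y t. y \<in> a \<and> m \<bullet> y = c \<and> t \<in> {0..1}} = emeasure ?N a"
      using hyperplane_cylinder_eq[OF m] by simp
  qed auto
  also have "\<dots> = ?N"
    using measure_of_of_measure[of ?N] by simp
  finally show ?thesis .
qed

lemma sets_hyperplane_measure [simp, measurable_cong]: "sets (hyperplane_measure m c) = sets borel"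
  unfolding hyperplane_measure_def
  by (simp add: sets_measure_of_conv) (metis sets.sigma_sets_eq space_borel)

lemma nn_integral_hyperplane_measure:
  assumes m: "norm m = 1" and [measurable]: "f \<in> borel_measurable borel"
  shows "(\<integral>\<^sup>+y. f y \<partial>hyperplane_measure m c)
    = (\<integral>\<^sup>+x. indicator (hyperplane_slab m c) x * f (hyperplane_proj m c x) \<partial>lborel)"
  unfolding hyperplane_measure_eq_distr[OF m] by (simp add: nn_integral_distr nn_integral_density)

lemma AE_hyperplane_measure:
  fixes m :: "real^'n"
  assumes m: "norm m = 1"
  shows "AE y in hyperplane_measure m c. m \<bullet> y = c"
proof -
  have mm: "m \<bullet> m = 1" using m by (simp add: dot_square_norm)
  have off_plane: "{y. m \<bullet> y \<noteq> c} \<in> sets borel" by measurable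
  have "hyperplane_proj m c -` {y. m \<bullet> y \<noteq> c} = {}"
    using mm by (auto simp: hyperplane_proj_def inner_diff_right)
  then have "emeasure (hyperplane_measure m c) {y. m \<bullet> y \<noteq> c} = 0"
    unfolding hyperplane_measure_eq_distr[OF m] using off_plane
    by (simp add: emeasure_distr emeasure_density_indicator)
  then show ?thesis using off_plane
    by (intro AE_I[where N="{y. m \<bullet> y \<noteq> c}"]) auto
qed

lemma emeasure_hyperplane_measure_bounded_finite:
  fixes m :: "real^'n"
  assumes m: "norm m = 1" and A: "bounded A" "A \<in> sets borel"
  shows "emeasure (hyperplane_measure m c) A < \<infinity>"
proof -
  obtain R where R: "\<And>x. x \<in> A \<Longrightarrow> norm x \<le> R" using A(1) bounded_iff by blast
  have "hyperplane_proj m c -` A \<in> sets borel"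
    using measurable_sets[OF hyperplane_proj_borel A(2)] by simp
  then have "emeasure (hyperplane_measure m c) A
      = emeasure lborel (hyperplane_proj m c -` A \<inter> hyperplane_slab m c)"
    unfolding hyperplane_measure_eq_distr[OF m] using A
    by (simp add: emeasure_distr emeasure_density_indicator)
  also have "\<dots> < \<infinity>"
  proof (rule emeasure_bounded_finite)
    show "bounded (hyperplane_proj m c -` A \<inter> hyperplane_slab m c)"
      unfolding bounded_iff
    proof (intro exI ballI)
      fix x assume x: "x \<in> hyperplane_proj m c -` A \<inter> hyperplane_slab m c"
      have "x = hyperplane_proj m c x + (m \<bullet> x - c) *\<^sub>R m" by (simp add: hyperplane_proj_def)
      then have "norm x \<le> norm (hyperplane_proj m c x) + norm ((m \<bullet> x - c) *\<^sub>R m)"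
        by (metis norm_triangle_ineq)
      also have "\<dots> \<le> R + 1"
        using x R m by (auto simp: hyperplane_slab_def intro!: add_mono)
      finally show "norm x \<le> R + 1" .
    qed
  qed
  finally show ?thesis .
qed

lemma integrable_hyperplane_measure:
  fixes m :: "real^'n" and f :: "real^'n \<Rightarrow> real"
  assumes m: "norm m = 1" and [measurable]: "f \<in> borel_measurable borel"
    and bound: "\<And>x. \<bar>f x\<bar> \<le> B" and supp: "\<And>x. norm x > R \<Longrightarrow> f x = 0"
  shows "integrable (hyperplane_measure m c) f"
proof (rule integrableI_bounded_set[where A="cball 0 R" and B=B])
  show "emeasure (hyperplane_measure m c) (cball 0 R) < \<infinity>"
    by (rule emeasure_hyperplane_measure_bounded_finite[OF m]) auto
  show "AE x in hyperplane_measure m c. x \<notin> cball 0 R \<longrightarrow> f x = 0"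
    using supp by auto
qed (use bound in auto)

lemma integrable_lborel_bounded_support:
  fixes f :: "'a::euclidean_space \<Rightarrow> real"
  assumes [measurable]: "f \<in> borel_measurable borel" and bound: "\<And>x. \<bar>f x\<bar> \<le> B"
    and supp: "\<And>x. norm x > R \<Longrightarrow> f x = 0"
  shows "integrable lborel f"
proof (rule integrableI_bounded_set[where A="cball 0 R" and B=B])
  show "emeasure lborel (cball 0 R) < \<infinity>" by (rule emeasure_bounded_finite) simp
  show "AE x in lborel. x \<notin> cball 0 R \<longrightarrow> f x = 0" using supp by auto
qed (use bound in auto)

lemma nn_integral_lborel_translate:
  fixes f :: "'a::euclidean_space \<Rightarrow> ennreal"
  assumes [measurable]: "f \<in> borel_measurable borel"
  shows "(\<integral>\<^sup>+x. f x \<partial>lborel) = (\<integral>\<^sup>+x. f (a + x) \<partial>lborel)"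
proof -
  have "(\<integral>\<^sup>+x. f x \<partial>lborel) = (\<integral>\<^sup>+x. f x \<partial>distr lborel borel ((+) a))"
    by (simp add: lborel_distr_plus)
  also have "\<dots> = (\<integral>\<^sup>+x. f (a + x) \<partial>lborel)"
    by (simp add: nn_integral_distr)
  finally show ?thesis .
qed

text \<open>Sliding the unit slab along its normal sweeps out each point exactly once per unit of
  shift.\<close>
lemma nn_integral_lborel_slab_shifts:
  fixes m :: "real^'n" and f :: "real^'n \<Rightarrow> ennreal"
  assumes m: "norm m = 1" and [measurable]: "f \<in> borel_measurable borel"
  shows "(\<integral>\<^sup>+r. (\<integral>\<^sup>+x. indicator (hyperplane_slab m c) x * f (hyperplane_proj m c x + r *\<^sub>R m) \<partial>lborel) \<partial>lborel)
    = (\<integral>\<^sup>+x. f x \<partial>lborel)"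
proof -
  have mm: "m \<bullet> m = 1" using m by (simp add: dot_square_norm)
  define S where "S = hyperplane_slab m c"
  have [measurable]: "S \<in> sets borel" by (simp add: S_def)
  have "(\<integral>\<^sup>+r. (\<integral>\<^sup>+x. indicator S x * f (hyperplane_proj m c x + r *\<^sub>R m) \<partial>lborel) \<partial>lborel)
      = (\<integral>\<^sup>+x. (\<integral>\<^sup>+r. indicator S x * f (hyperplane_proj m c x + r *\<^sub>R m) \<partial>lborel) \<partial>lborel)"
    by (rule lborel_pair.Fubini') measurable
  also have "\<dots> = (\<integral>\<^sup>+x. (\<integral>\<^sup>+r. indicator S x * f (x + r *\<^sub>R m) \<partial>lborel) \<partial>lborel)"
  proof (rule nn_integral_cong)
    fix x :: "real^'n"
    have "(\<integral>\<^sup>+r. indicator S x * f (x + r *\<^sub>R m) \<partial>lborel)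
       = (\<integral>\<^sup>+r. indicator S x * f (x + (- (m \<bullet> x - c) + r) *\<^sub>R m) \<partial>lborel)"
      using nn_integral_real_affine[of "\<lambda>r. indicator S x * f (x + r *\<^sub>R m)" 1] by simp
    then show "(\<integral>\<^sup>+r. indicator S x * f (hyperplane_proj m c x + r *\<^sub>R m) \<partial>lborel)
        = (\<integral>\<^sup>+r. indicator S x * f (x + r *\<^sub>R m) \<partial>lborel)"
      by (simp add: hyperplane_proj_def algebra_simps)
  qed
  also have "\<dots> = (\<integral>\<^sup>+r. (\<integral>\<^sup>+x. indicator S x * f (x + r *\<^sub>R m) \<partial>lborel) \<partial>lborel)"
    by (rule lborel_pair.Fubini'[symmetric]) measurable
  also have "\<dots> = (\<integral>\<^sup>+r. (\<integral>\<^sup>+x. indicator S (x - r *\<^sub>R m) * f x \<partial>lborel) \<partial>lborel)"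
  proof (rule nn_integral_cong)
    fix r :: real
    show "(\<integral>\<^sup>+x. indicator S x * f (x + r *\<^sub>R m) \<partial>lborel)
        = (\<integral>\<^sup>+x. indicator S (x - r *\<^sub>R m) * f x \<partial>lborel)"
      by (subst nn_integral_lborel_translate[where a="r *\<^sub>R m"]) (measurable, simp add: add.commute)
  qed
  also have "\<dots> = (\<integral>\<^sup>+x. (\<integral>\<^sup>+r. indicator S (x - r *\<^sub>R m) * f x \<partial>lborel) \<partial>lborel)"
    by (rule lborel_pair.Fubini') measurable
  also have "\<dots> = (\<integral>\<^sup>+x. f x \<partial>lborel)"
  proof (rule nn_integral_cong)
    fix x :: "real^'n"
    have "(\<integral>\<^sup>+r. indicator S (x - r *\<^sub>R m) * f x \<partial>lborel)
        = (\<integral>\<^sup>+r. indicator {m \<bullet> x - c - 1 .. m \<bullet> x - c} r \<partial>lborel) * f x"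
      using mm by (subst nn_integral_multc[symmetric])
        (auto intro!: nn_integral_cong simp: S_def hyperplane_slab_def indicator_def inner_diff_right)
    then show "(\<integral>\<^sup>+r. indicator S (x - r *\<^sub>R m) * f x \<partial>lborel) = f x" by simp
  qed
  finally show ?thesis unfolding S_def .
qed

text \<open>Translating along the hyperplane moves the slab onto itself.\<close>
lemma nn_integral_slab_shear:
  fixes m v :: "real^'n" and f :: "real^'n \<Rightarrow> ennreal"
  assumes m: "norm m = 1" and [measurable]: "f \<in> borel_measurable borel"
  shows "(\<integral>\<^sup>+x. indicator (hyperplane_slab m c) x * f (hyperplane_proj m c x + t *\<^sub>R v) \<partial>lborel)
    = (\<integral>\<^sup>+x. indicator (hyperplane_slab m c) x * f (hyperplane_proj m c x + (m \<bullet> v * t) *\<^sub>R m) \<partial>lborel)"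
proof -
  define S where "S = hyperplane_slab m c"
  define P where "P = hyperplane_proj m c"
  define w where "w = v - (m \<bullet> v) *\<^sub>R m"
  have [measurable]: "S \<in> sets borel" "P \<in> borel_measurable borel" by (simp_all add: S_def P_def)
  have mm: "m \<bullet> m = 1" using m by (simp add: dot_square_norm)
  have mw: "m \<bullet> w = 0" by (simp add: w_def inner_diff_right mm)
  have "(\<integral>\<^sup>+x. indicator S x * f (P x + (m \<bullet> v * t) *\<^sub>R m) \<partial>lborel)
      = (\<integral>\<^sup>+x. indicator S (t *\<^sub>R w + x) * f (P (t *\<^sub>R w + x) + (m \<bullet> v * t) *\<^sub>R m) \<partial>lborel)"
    by (rule nn_integral_lborel_translate) measurable
  also have "\<dots> = (\<integral>\<^sup>+x. indicator S x * f (P x + t *\<^sub>R v) \<partial>lborel)"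
  proof (rule nn_integral_cong)
    fix x :: "real^'n"
    have "indicator S (t *\<^sub>R w + x) = (indicator S x :: ennreal)"
      using mw by (simp add: S_def hyperplane_slab_def indicator_def inner_add_right)
    moreover have "P (t *\<^sub>R w + x) + (m \<bullet> v * t) *\<^sub>R m = P x + t *\<^sub>R v"
      using mw by (simp add: P_def hyperplane_proj_def inner_add_right algebra_simps)
        (simp add: w_def algebra_simps)
    ultimately show "indicator S (t *\<^sub>R w + x) * f (P (t *\<^sub>R w + x) + (m \<bullet> v * t) *\<^sub>R m)
        = indicator S x * f (P x + t *\<^sub>R v)"
      by simp
  qed
  finally show ?thesis unfolding S_def P_def by simp
qed

text \<open>Lebesgue measure disintegrates along the lines \<open>y + \<real> v\<close> through the points of a
  hyperplane transversal to \<open>v\<close>; the factor \<open>\<bar>m \<bullet> v\<bar>\<close> is the Jacobian of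
  \<open>(y, t) \<mapsto> y + t v\<close>.\<close>
lemma nn_integral_lborel_lines:
  fixes m v :: "real^'n" and f :: "real^'n \<Rightarrow> ennreal"
  assumes m: "norm m = 1" and transversal: "m \<bullet> v \<noteq> 0" and [measurable]: "f \<in> borel_measurable borel"
  shows "(\<integral>\<^sup>+x. f x \<partial>lborel) =
    ennreal \<bar>m \<bullet> v\<bar> * (\<integral>\<^sup>+y. (\<integral>\<^sup>+t. f (y + t *\<^sub>R v) \<partial>lborel) \<partial>hyperplane_measure m c)"
proof -
  define S where "S = hyperplane_slab m c"
  define P where "P = hyperplane_proj m c"
  have [measurable]: "S \<in> sets borel" "P \<in> borel_measurable borel" by (simp_all add: S_def P_def)
  define K where "K = (\<lambda>r. \<integral>\<^sup>+x. indicator S x * f (P x + r *\<^sub>R m) \<partial>lborel)"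
  have [measurable]: "K \<in> borel_measurable borel"
    unfolding K_def by measurable
  have "(\<integral>\<^sup>+y. (\<integral>\<^sup>+t. f (y + t *\<^sub>R v) \<partial>lborel) \<partial>hyperplane_measure m c)
      = (\<integral>\<^sup>+x. indicator S x * (\<integral>\<^sup>+t. f (P x + t *\<^sub>R v) \<partial>lborel) \<partial>lborel)"
    unfolding S_def P_def by (rule nn_integral_hyperplane_measure[OF m]) measurable
  also have "\<dots> = (\<integral>\<^sup>+t. (\<integral>\<^sup>+x. indicator S x * f (P x + t *\<^sub>R v) \<partial>lborel) \<partial>lborel)"
    by (subst lborel_pair.Fubini') (measurable, simp add: nn_integral_cmult)
  also have "\<dots> = (\<integral>\<^sup>+t. K (m \<bullet> v * t) \<partial>lborel)"
    unfolding K_def S_def P_def by (intro nn_integral_cong nn_integral_slab_shear[OF m]) measurable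
  finally have "ennreal \<bar>m \<bullet> v\<bar> * (\<integral>\<^sup>+y. (\<integral>\<^sup>+t. f (y + t *\<^sub>R v) \<partial>lborel) \<partial>hyperplane_measure m c)
      = (\<integral>\<^sup>+r. K r \<partial>lborel)"
    using nn_integral_real_affine[of K "m \<bullet> v" 0] transversal by simp
  also have "\<dots> = (\<integral>\<^sup>+x. f x \<partial>lborel)"
    unfolding K_def S_def P_def by (rule nn_integral_lborel_slab_shifts[OF m]) measurable
  finally show ?thesis by simp
qed

lemma line_support_bound:
  fixes y v :: "real^'n"
  assumes v: "v \<noteq> 0" and supp: "\<And>x. norm x > R \<Longrightarrow> f x = 0"
    and t: "\<bar>t\<bar> > (R + norm y) / norm v"
  shows "f (y + t *\<^sub>R v) = 0"
proof -
  have "R + norm y < \<bar>t\<bar> * norm v" using t v by (simp add: field_simps)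
  also have "\<bar>t\<bar> * norm v \<le> norm (y + t *\<^sub>R v) + norm y"
    using norm_triangle_ineq4[of "y + t *\<^sub>R v" y] by simp
  finally show ?thesis using supp by simp
qed

lemma integrable_line:
  fixes y v :: "real^'n" and f :: "real^'n \<Rightarrow> real"
  assumes v: "v \<noteq> 0" and [measurable]: "f \<in> borel_measurable borel"
    and bound: "\<And>x. \<bar>f x\<bar> \<le> B" and supp: "\<And>x. norm x > R \<Longrightarrow> f x = 0"
  shows "integrable lborel (\<lambda>t. f (y + t *\<^sub>R v))"
  by (rule integrable_lborel_bounded_support[where B=B and R="(R + norm y) / norm v"])
     (use bound line_support_bound[OF v supp] in auto)

lemma integral_lborel_lines_nonneg:
  fixes m v :: "real^'n" and f :: "real^'n \<Rightarrow> real"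
  assumes m: "norm m = 1" and transversal: "m \<bullet> v \<noteq> 0" and f_meas [measurable]: "f \<in> borel_measurable borel"
    and nonneg: "\<And>x. f x \<ge> 0" and bound: "\<And>x. \<bar>f x\<bar> \<le> B" and supp: "\<And>x. norm x > R \<Longrightarrow> f x = 0"
  shows "integral\<^sup>L lborel f
      = \<bar>m \<bullet> v\<bar> * (\<integral>y. (\<integral>t. f (y + t *\<^sub>R v) \<partial>lborel) \<partial>hyperplane_measure m c)"
    and "integrable (hyperplane_measure m c) (\<lambda>y. \<integral>t. f (y + t *\<^sub>R v) \<partial>lborel)"
proof -
  have v: "v \<noteq> 0" using transversal by auto
  define I where "I = (\<lambda>y. \<integral>\<^sup>+t. ennreal (f (y + t *\<^sub>R v)) \<partial>lborel)"
  have [measurable]: "I \<in> borel_measurable borel" unfolding I_def by measurable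
  have I_finite: "I y < \<infinity>" for y
    using integrable_line[OF v f_meas bound supp, where y=y] nonneg
    unfolding I_def integrable_iff_bounded by simp
  have line_integral: "(\<integral>t. f (y + t *\<^sub>R v) \<partial>lborel) = enn2real (I y)" for y
    unfolding I_def using nonneg by (subst integral_eq_nn_integral) auto
  have lines: "(\<integral>\<^sup>+x. ennreal (f x) \<partial>lborel) = ennreal \<bar>m \<bullet> v\<bar> * (\<integral>\<^sup>+y. I y \<partial>hyperplane_measure m c)"
    unfolding I_def by (rule nn_integral_lborel_lines[OF m transversal]) measurable
  have "(\<integral>\<^sup>+x. ennreal (f x) \<partial>lborel) < \<infinity>"
    using integrable_lborel_bounded_support[OF f_meas bound supp] nonneg
    unfolding integrable_iff_bounded by simp
  then have I_integral_finite: "(\<integral>\<^sup>+y. I y \<partial>hyperplane_measure m c) < \<infinity>"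
    using lines transversal by (auto simp: ennreal_mult_less_top)
  have enn2real_I: "(\<integral>\<^sup>+y. ennreal (enn2real (I y)) \<partial>hyperplane_measure m c)
      = (\<integral>\<^sup>+y. I y \<partial>hyperplane_measure m c)"
    using I_finite by (intro nn_integral_cong) simp
  show "integrable (hyperplane_measure m c) (\<lambda>y. \<integral>t. f (y + t *\<^sub>R v) \<partial>lborel)"
    unfolding line_integral by (rule integrableI_nonneg) (use enn2real_I I_integral_finite in auto)
  have "(\<integral>y. (\<integral>t. f (y + t *\<^sub>R v) \<partial>lborel) \<partial>hyperplane_measure m c)
      = enn2real (\<integral>\<^sup>+y. I y \<partial>hyperplane_measure m c)"
    unfolding line_integral by (subst integral_eq_nn_integral) (use enn2real_I in auto)
  moreover have "integral\<^sup>L lborel f = enn2real (\<integral>\<^sup>+x. ennreal (f x) \<partial>lborel)"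
    using nonneg by (subst integral_eq_nn_integral) auto
  ultimately show "integral\<^sup>L lborel f
      = \<bar>m \<bullet> v\<bar> * (\<integral>y. (\<integral>t. f (y + t *\<^sub>R v) \<partial>lborel) \<partial>hyperplane_measure m c)"
    unfolding lines by (simp add: enn2real_mult)
qed

lemma integral_lborel_lines:
  fixes m v :: "real^'n" and f :: "real^'n \<Rightarrow> real"
  assumes m: "norm m = 1" and transversal: "m \<bullet> v \<noteq> 0" and [measurable]: "f \<in> borel_measurable borel"
    and bound: "\<And>x. \<bar>f x\<bar> \<le> B" and supp: "\<And>x. norm x > R \<Longrightarrow> f x = 0"
  shows "integral\<^sup>L lborel f
    = \<bar>m \<bullet> v\<bar> * (\<integral>y. (\<integral>t. f (y + t *\<^sub>R v) \<partial>lborel) \<partial>hyperplane_measure m c)"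
proof -
  have v: "v \<noteq> 0" using transversal by auto
  define fp where "fp = (\<lambda>x. max (f x) 0)"
  define fn where "fn = (\<lambda>x. max (- f x) 0)"
  have [measurable]: "fp \<in> borel_measurable borel" "fn \<in> borel_measurable borel"
    unfolding fp_def fn_def by measurable
  have fp_bound: "\<bar>fp x\<bar> \<le> B" and fn_bound: "\<bar>fn x\<bar> \<le> B" for x
    using bound[of x] by (auto simp: fp_def fn_def)
  have fp_supp: "norm x > R \<Longrightarrow> fp x = 0" and fn_supp: "norm x > R \<Longrightarrow> fn x = 0" for x
    using supp[of x] by (auto simp: fp_def fn_def)
  have f_split: "f x = fp x - fn x" for x by (auto simp: fp_def fn_def)
  have fp_lines: "integral\<^sup>L lborel fp
      = \<bar>m \<bullet> v\<bar> * (\<integral>y. (\<integral>t. fp (y + t *\<^sub>R v) \<partial>lborel) \<partial>hyperplane_measure m c)"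
    and fp_integrable: "integrable (hyperplane_measure m c) (\<lambda>y. \<integral>t. fp (y + t *\<^sub>R v) \<partial>lborel)"
    by (rule integral_lborel_lines_nonneg[OF m transversal _ _ fp_bound fp_supp]; simp add: fp_def)+
  have fn_lines: "integral\<^sup>L lborel fn
      = \<bar>m \<bullet> v\<bar> * (\<integral>y. (\<integral>t. fn (y + t *\<^sub>R v) \<partial>lborel) \<partial>hyperplane_measure m c)"
    and fn_integrable: "integrable (hyperplane_measure m c) (\<lambda>y. \<integral>t. fn (y + t *\<^sub>R v) \<partial>lborel)"
    by (rule integral_lborel_lines_nonneg[OF m transversal _ _ fn_bound fn_supp]; simp add: fn_def)+
  have "integral\<^sup>L lborel f = integral\<^sup>L lborel fp - integral\<^sup>L lborel fn"
    unfolding f_split by (rule Bochner_Integration.integral_diff)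
      (auto intro!: integrable_lborel_bounded_support fp_bound fp_supp fn_bound fn_supp)
  also have "\<dots> = \<bar>m \<bullet> v\<bar> * (\<integral>y. (\<integral>t. fp (y + t *\<^sub>R v) \<partial>lborel)
      - (\<integral>t. fn (y + t *\<^sub>R v) \<partial>lborel) \<partial>hyperplane_measure m c)"
    unfolding fp_lines fn_lines
    by (simp add: right_diff_distrib Bochner_Integration.integral_diff[OF fp_integrable fn_integrable])
  also have "\<dots> = \<bar>m \<bullet> v\<bar> * (\<integral>y. (\<integral>t. f (y + t *\<^sub>R v) \<partial>lborel) \<partial>hyperplane_measure m c)"
    unfolding f_split
    by (subst Bochner_Integration.integral_diff)
      (auto intro!: integrable_line[OF v] fp_bound fp_supp fn_bound fn_supp)
  finally show ?thesis .
qed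

definition compactly_supported_C1 :: "(real \<Rightarrow> real) \<Rightarrow> (real \<Rightarrow> real) \<Rightarrow> real \<Rightarrow> bool" where
  "compactly_supported_C1 F F' R \<longleftrightarrow>
     (\<forall>t. (F has_real_derivative F' t) (at t)) \<and> continuous_on UNIV F' \<and>
     (\<forall>t. R \<le> \<bar>t\<bar> \<longrightarrow> F t = 0 \<and> F' t = 0)"

lemma compactly_supported_C1_continuous:
  "compactly_supported_C1 F F' R \<Longrightarrow> continuous_on UNIV F"
  unfolding compactly_supported_C1_def by (meson DERIV_isCont continuous_at_imp_continuous_on)

lemma compactly_supported_C1_affine_mult:
  assumes g: "compactly_supported_C1 g g' R"
  shows "compactly_supported_C1 (\<lambda>t. (A + k * t) * g t) (\<lambda>t. k * g t + (A + k * t) * g' t) R"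
proof -
  have g_deriv: "\<And>t. (g has_real_derivative g' t) (at t)" and "continuous_on UNIV g'"
    and supp: "\<And>t. R \<le> \<bar>t\<bar> \<Longrightarrow> g t = 0 \<and> g' t = 0"
    using g by (auto simp: compactly_supported_C1_def)
  have "((\<lambda>t. (A + k * t) * g t) has_real_derivative k * g t + (A + k * t) * g' t) (at t)" for t
    by (rule derivative_eq_intros refl g_deriv)+ (simp add: algebra_simps)
  moreover have "continuous_on UNIV (\<lambda>t. k * g t + (A + k * t) * g' t)"
    by (intro continuous_intros compactly_supported_C1_continuous[OF g] \<open>continuous_on UNIV g'\<close>)
  ultimately show ?thesis
    using supp by (simp add: compactly_supported_C1_def)
qed

lemma integrable_continuous_compact_support:
  fixes f :: "real \<Rightarrow> real"
  assumes "continuous_on UNIV f" and supp: "\<And>t. R \<le> \<bar>t\<bar> \<Longrightarrow> f t = 0"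
  shows "integrable lborel f"
proof -
  have "integrable lborel (\<lambda>t. f t * indicator {-\<bar>R\<bar>..\<bar>R\<bar>} t)"
    by (rule borel_integrable_atLeastAtMost) (use assms continuous_on_eq_continuous_at in blast)
  also have "(\<lambda>t. f t * indicator {-\<bar>R\<bar>..\<bar>R\<bar>} t) = f"
    using supp by (force simp: indicator_def)
  finally show ?thesis .
qed

lemma integrable_compactly_supported_C1:
  assumes "compactly_supported_C1 F F' R"
  shows "integrable lborel F" "integrable lborel F'"
  using assms compactly_supported_C1_continuous[OF assms]
  by (auto simp: compactly_supported_C1_def intro: integrable_continuous_compact_support)

lemma integral_Ioi_deriv:
  assumes F: "compactly_supported_C1 F F' R"
  shows "(LBINT t. indicator {a<..} t * F' t) = - F a"
proof -
  define b where "b = \<bar>a\<bar> + \<bar>R\<bar>"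
  have F_deriv: "\<And>t. (F has_real_derivative F' t) (at t)" and F'_cont: "continuous_on UNIV F'"
    and supp: "\<And>t. R \<le> \<bar>t\<bar> \<Longrightarrow> F t = 0 \<and> F' t = 0"
    using F by (auto simp: compactly_supported_C1_def)
  have [measurable]: "F' \<in> borel_measurable borel"
    using F'_cont by (rule borel_measurable_continuous_onI)
  have "(LBINT t. indicator {a<..} t * F' t) = (LBINT t. indicator {a..b} t *\<^sub>R F' t)"
  proof (rule integral_cong_AE)
    show "AE t in lborel. indicator {a<..} t * F' t = indicator {a..b} t *\<^sub>R F' t"
      using AE_lborel_singleton[of a]
      by eventually_elim (use supp in \<open>auto simp: b_def indicator_def\<close>)
  qed measurable
  also have "\<dots> = F b - F a"
  proof (rule integral_FTC_atLeastAtMost)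
    fix t show "(F has_vector_derivative F' t) (at t within {a..b})"
      using F_deriv[of t]
      by (simp add: has_real_derivative_iff_has_vector_derivative has_vector_derivative_at_within)
  qed (use F'_cont continuous_on_subset in \<open>auto simp: b_def\<close>)
  finally show ?thesis using supp[of b] by (simp add: b_def)
qed

lemma integral_deriv_eq_0:
  assumes F: "compactly_supported_C1 F F' R"
  shows "(LBINT t. F' t) = 0"
proof -
  have supp: "\<And>t. R \<le> \<bar>t\<bar> \<Longrightarrow> F t = 0 \<and> F' t = 0"
    using F by (auto simp: compactly_supported_C1_def)
  have "(LBINT t. F' t) = (LBINT t. indicator {- \<bar>R\<bar><..} t * F' t)"
    by (rule Bochner_Integration.integral_cong) (use supp in \<open>auto simp: indicator_def\<close>)
  then show ?thesis using integral_Ioi_deriv[OF F] supp[of "- \<bar>R\<bar>"] by simp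
qed

lemma integral_Iio_deriv:
  assumes F: "compactly_supported_C1 F F' R"
  shows "(LBINT t. indicator {..<a} t * F' t) = F a"
proof -
  have F'_int: "integrable lborel F'" "integrable lborel (\<lambda>t. indicator {a<..} t * F' t)"
    using integrable_compactly_supported_C1(2)[OF F] integrable_mult_indicator[of "{a<..}" lborel F']
    by auto
  have "(LBINT t. indicator {..<a} t * F' t) = (LBINT t. F' t - indicator {a<..} t * F' t)"
  proof (rule integral_cong_AE)
    show "AE t in lborel. indicator {..<a} t * F' t = F' t - indicator {a<..} t * F' t"
      using AE_lborel_singleton[of a] by eventually_elim (auto simp: indicator_def)
  qed (use F'_int in auto)
  also have "\<dots> = F a"
    using integral_deriv_eq_0[OF F] integral_Ioi_deriv[OF F, of a]
    by (simp add: Bochner_Integration.integral_diff[OF F'_int])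
  finally show ?thesis .
qed

lemma integral_half_line_deriv:
  assumes F: "compactly_supported_C1 F F' R" and k: "k \<noteq> 0"
  shows "(LBINT t. indicator {t. A + k * t > 0} t * F' t) = - sgn k * F (- A / k)"
proof (cases "k > 0")
  case True
  then have "{t. A + k * t > 0} = {- A / k<..}" by (auto simp: field_simps)
  then show ?thesis using integral_Ioi_deriv[OF F] True by simp
next
  case False
  then have "{t. A + k * t > 0} = {..< - A / k}" using k by (auto simp: field_simps)
  then show ?thesis using integral_Iio_deriv[OF F] False k by simp
qed

lemma integral_affine_mult_deriv:
  assumes g: "compactly_supported_C1 g g' R"
  shows "(LBINT t. (A + B * t) * g' t) = - B * (LBINT t. g t)"
proof -
  note affine_g = compactly_supported_C1_affine_mult[OF g, of A B]
  have "integrable lborel (\<lambda>t. B * g t + (A + B * t) * g' t)" "integrable lborel (\<lambda>t. B * g t)"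
    using integrable_compactly_supported_C1(2)[OF affine_g]
      integrable_mult_right[OF integrable_compactly_supported_C1(1)[OF g]]
    by simp_all
  then have "(LBINT t. (A + B * t) * g' t) = (LBINT t. B * g t + (A + B * t) * g' t) - (LBINT t. B * g t)"
    by (subst Bochner_Integration.integral_diff[symmetric]) auto
  then show ?thesis using integral_deriv_eq_0[OF affine_g] by simp
qed

lemma integral_ramp_mult_deriv:
  assumes g: "compactly_supported_C1 g g' R"
  shows "(LBINT t. max (A + k * t) 0 * g' t) = - k * (LBINT t. indicator {t. A + k * t > 0} t * g t)"
proof (cases "k = 0")
  case True
  then show ?thesis using integral_deriv_eq_0[OF g] by simp
next
  case False
  define S where "S = {t. A + k * t > 0}"
  note affine_g = compactly_supported_C1_affine_mult[OF g, of A k]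
  have S_borel: "S \<in> sets lborel" by (simp add: S_def)
  have "integrable lborel (\<lambda>t. indicator S t * (k * g t + (A + k * t) * g' t))"
    "integrable lborel (\<lambda>t. indicator S t * (k * g t))"
    using integrable_mult_indicator[OF S_borel integrable_compactly_supported_C1(2)[OF affine_g]]
      integrable_mult_indicator[OF S_borel integrable_mult_right[OF integrable_compactly_supported_C1(1)[OF g]]]
    by simp_all
  moreover have "max (A + k * t) 0 * g' t
      = indicator S t * (k * g t + (A + k * t) * g' t) - indicator S t * (k * g t)" for t
    by (simp add: S_def indicator_def)
  ultimately have "(LBINT t. max (A + k * t) 0 * g' t)
      = (LBINT t. indicator S t * (k * g t + (A + k * t) * g' t)) - (LBINT t. indicator S t * (k * g t))"
    by (simp add: Bochner_Integration.integral_diff)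
  moreover have "(LBINT t. indicator S t * (k * g t)) = k * (LBINT t. indicator S t * g t)"
    by (simp add: mult.left_commute[of "indicator S _"])
  ultimately show ?thesis
    using integral_half_line_deriv[OF affine_g False] by (simp add: S_def)
qed
lemma integral_lborel_axis_lines:
  fixes f :: "real^'n \<Rightarrow> real"
  assumes "f \<in> borel_measurable borel" "\<And>x. \<bar>f x\<bar> \<le> B" "\<And>x. norm x > R \<Longrightarrow> f x = 0"
  shows "integral\<^sup>L lborel f
    = (\<integral>y. (\<integral>t. f (y + t *\<^sub>R axis i 1) \<partial>lborel) \<partial>hyperplane_measure (axis i 1) 0)"
  using integral_lborel_lines[of "axis i 1" "axis i 1" f B R 0] assms by simp

lemma continuous_vanishing_outside_ball_bounded:
  fixes f :: "real^'n \<Rightarrow> real"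
  assumes f: "continuous_on UNIV f" and supp: "\<And>x. 1 \<le> norm x \<Longrightarrow> f x = 0"
  shows "\<exists>B. \<forall>x. \<bar>f x\<bar> \<le> B"
proof -
  have "compact (f ` cball 0 1)"
    by (rule compact_continuous_image) (use f continuous_on_subset in auto)
  then obtain B where B: "\<And>y. y \<in> f ` cball 0 1 \<Longrightarrow> norm y \<le> B"
    using compact_imp_bounded bounded_iff by metis
  have "\<bar>f x\<bar> \<le> max B 0" for x
    using B[of "f x"] supp[of x] by (cases "norm x \<le> 1") auto
  then show ?thesis by blast
qed

lemma integrable_continuous_vanishing_outside_ball:
  fixes f :: "real^'n \<Rightarrow> real"
  assumes f: "continuous_on UNIV f" and supp: "\<And>x. 1 \<le> norm x \<Longrightarrow> f x = 0"
  shows "integrable lborel f"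
proof -
  obtain B where "\<And>x. \<bar>f x\<bar> \<le> B" using continuous_vanishing_outside_ball_bounded[OF f supp] by blast
  then show ?thesis
    using f supp by (intro integrable_lborel_bounded_support[where R=1])
      (auto intro: borel_measurable_continuous_onI)
qed

lemma has_real_derivative_along_line:
  fixes F G :: "real^'n \<Rightarrow> real"
  assumes "\<And>x. ((\<lambda>t. F (x + t *\<^sub>R e)) has_real_derivative G x) (at 0)"
  shows "((\<lambda>t. F (y + t *\<^sub>R e)) has_real_derivative G (y + t *\<^sub>R e)) (at t)"
proof -
  have "((\<lambda>s. F ((y + t *\<^sub>R e) + s *\<^sub>R e)) has_real_derivative G (y + t *\<^sub>R e)) (at 0)"
    by (rule assms)
  moreover have "(\<lambda>s. F ((y + t *\<^sub>R e) + s *\<^sub>R e)) = (\<lambda>s. F (y + (s + t) *\<^sub>R e))"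
    by (simp add: scaleR_add_left add_ac)
  ultimately show ?thesis
    using DERIV_shift[of "\<lambda>t. F (y + t *\<^sub>R e)" "G (y + t *\<^sub>R e)" 0 t] by simp
qed

lemma norm_axis_line_ge:
  fixes y :: "real^'n"
  assumes "1 + norm y \<le> \<bar>t\<bar>"
  shows "1 \<le> norm (y + t *\<^sub>R axis k 1)"
proof -
  have "\<bar>t\<bar> \<le> norm (y + t *\<^sub>R axis k 1) + norm y"
    using norm_triangle_ineq4[of "y + t *\<^sub>R axis k 1" y] by simp
  then show ?thesis using assms by simp
qed

text \<open>The situation of \<open>F = mm_coeff i j \<phi>\<close> for a test function \<open>\<phi>\<close>, with \<open>G = \<partial>\<^sub>j F\<close>
  and \<open>D = \<partial>\<^sub>i G\<close>.\<close>
locale second_partial_in_ball =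
  fixes F G D :: "real^'n \<Rightarrow> real" and i j :: 'n
  assumes partial_F: "\<And>x. ((\<lambda>t. F (x + t *\<^sub>R axis j 1)) has_real_derivative G x) (at 0)"
    and partial_G: "\<And>x. ((\<lambda>t. G (x + t *\<^sub>R axis i 1)) has_real_derivative D x) (at 0)"
    and cont_F: "continuous_on UNIV F" and cont_G: "continuous_on UNIV G"
    and cont_D: "continuous_on UNIV D"
    and supp_F: "\<And>x. 1 \<le> norm x \<Longrightarrow> F x = 0"
    and supp_G: "\<And>x. 1 \<le> norm x \<Longrightarrow> G x = 0"
    and supp_D: "\<And>x. 1 \<le> norm x \<Longrightarrow> D x = 0"
begin

lemma borel_measurable [measurable]:
  "F \<in> borel_measurable borel" "G \<in> borel_measurable borel" "D \<in> borel_measurable borel"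
  using cont_F cont_G cont_D by (auto intro: borel_measurable_continuous_onI)

lemma compactly_supported_C1_line_G:
  "compactly_supported_C1 (\<lambda>t. G (y + t *\<^sub>R axis i 1)) (\<lambda>t. D (y + t *\<^sub>R axis i 1)) (1 + norm y)"
  unfolding compactly_supported_C1_def
proof (intro conjI allI impI)
  show "((\<lambda>t. G (y + t *\<^sub>R axis i 1)) has_real_derivative D (y + t *\<^sub>R axis i 1)) (at t)" for t
    by (rule has_real_derivative_along_line[OF partial_G])
  show "continuous_on UNIV (\<lambda>t. D (y + t *\<^sub>R axis i 1))"
    by (rule continuous_on_compose2[OF cont_D]) (auto intro!: continuous_intros)
  fix t assume "1 + norm y \<le> \<bar>t\<bar>"
  then show "G (y + t *\<^sub>R axis i 1) = 0" "D (y + t *\<^sub>R axis i 1) = 0"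
    using norm_axis_line_ge supp_G supp_D by blast+
qed

lemma compactly_supported_C1_line_F:
  "compactly_supported_C1 (\<lambda>t. F (y + t *\<^sub>R axis j 1)) (\<lambda>t. G (y + t *\<^sub>R axis j 1)) (1 + norm y)"
  unfolding compactly_supported_C1_def
proof (intro conjI allI impI)
  show "((\<lambda>t. F (y + t *\<^sub>R axis j 1)) has_real_derivative G (y + t *\<^sub>R axis j 1)) (at t)" for t
    by (rule has_real_derivative_along_line[OF partial_F])
  show "continuous_on UNIV (\<lambda>t. G (y + t *\<^sub>R axis j 1))"
    by (rule continuous_on_compose2[OF cont_G]) (auto intro!: continuous_intros)
  fix t assume "1 + norm y \<le> \<bar>t\<bar>"
  then show "F (y + t *\<^sub>R axis j 1) = 0" "G (y + t *\<^sub>R axis j 1) = 0"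
    using norm_axis_line_ge supp_F supp_G by blast+
qed

lemma integral_first_partial_eq_0: "integral\<^sup>L lborel G = 0"
proof -
  obtain B where "\<And>x. \<bar>G x\<bar> \<le> B"
    using continuous_vanishing_outside_ball_bounded[OF cont_G supp_G] by blast
  then have "integral\<^sup>L lborel G
      = (\<integral>y. (\<integral>t. G (y + t *\<^sub>R axis j 1) \<partial>lborel) \<partial>hyperplane_measure (axis j 1) 0)"
    by (intro integral_lborel_axis_lines[where R=1]) (auto intro: supp_G)
  then show ?thesis using integral_deriv_eq_0[OF compactly_supported_C1_line_F] by simp
qed

lemma integral_affine_mult_second_partial: "(LBINT x. (a \<bullet> x + b) * D x) = 0"
proof -
  obtain B where B: "\<And>x. \<bar>G x\<bar> \<le> B"
    using continuous_vanishing_outside_ball_bounded[OF cont_G supp_G] by blast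
  have "continuous_on UNIV (\<lambda>x. (a \<bullet> x + b) * D x)" by (intro continuous_intros cont_D)
  then obtain B' where B': "\<And>x. \<bar>(a \<bullet> x + b) * D x\<bar> \<le> B'"
    using continuous_vanishing_outside_ball_bounded supp_D by force
  have "(LBINT x. (a \<bullet> x + b) * D x)
      = (\<integral>y. (\<integral>t. ((a \<bullet> y + b) + a$i * t) * D (y + t *\<^sub>R axis i 1) \<partial>lborel) \<partial>hyperplane_measure (axis i 1) 0)"
    using integral_lborel_axis_lines[of "\<lambda>x. (a \<bullet> x + b) * D x" B' 1 i] B' supp_D
    by (simp add: inner_add_right inner_axis algebra_simps)
  also have "\<dots> = (\<integral>y. - (a$i) * (\<integral>t. G (y + t *\<^sub>R axis i 1) \<partial>lborel) \<partial>hyperplane_measure (axis i 1) 0)"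
    by (simp add: integral_affine_mult_deriv[OF compactly_supported_C1_line_G])
  also have "\<dots> = - (a$i) * integral\<^sup>L lborel G"
    using integral_lborel_axis_lines[of G B 1 i] B supp_G by simp
  finally show ?thesis using integral_first_partial_eq_0 by simp
qed

text \<open>The half-space version of \<open>\<integral> \<partial>\<^sub>j F = 0\<close>: the lines in direction \<open>j\<close> cross the
  bounding hyperplane once, and each contributes the value of \<open>F\<close> at the crossing.\<close>
lemma integral_half_space_first_partial:
  fixes m :: "real^'n"
  assumes m: "norm m = 1"
  shows "(LBINT x. indicator {x. m \<bullet> x > s} x * G x) = - m$j * (\<integral>y. F y \<partial>hyperplane_measure m s)"
proof -
  define H where "H = (\<lambda>x. indicator {x. m \<bullet> x > s} x * G x)"
  obtain B where B: "\<And>x. \<bar>G x\<bar> \<le> B"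
    using continuous_vanishing_outside_ball_bounded[OF cont_G supp_G] by blast
  have [measurable]: "H \<in> borel_measurable borel" unfolding H_def by measurable
  have H_bound: "\<bar>H x\<bar> \<le> B" for x using B[of x] by (auto simp: H_def indicator_def)
  have H_supp: "1 < norm x \<Longrightarrow> H x = 0" for x using supp_G[of x] by (simp add: H_def)
  show ?thesis
    unfolding H_def[symmetric]
  proof (cases "m$j = 0")
    case True
    have "integral\<^sup>L lborel H
        = (\<integral>y. (\<integral>t. H (y + t *\<^sub>R axis j 1) \<partial>lborel) \<partial>hyperplane_measure (axis j 1) 0)"
      using integral_lborel_axis_lines[of H B 1 j] H_bound H_supp by simp
    also have "\<dots> = (\<integral>y. indicator {x. m \<bullet> x > s} y * (\<integral>t. G (y + t *\<^sub>R axis j 1) \<partial>lborel)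
        \<partial>hyperplane_measure (axis j 1) 0)"
      using True by (simp add: H_def inner_add_right inner_axis indicator_def)
    finally show "integral\<^sup>L lborel H = - m$j * (\<integral>y. F y \<partial>hyperplane_measure m s)"
      using True integral_deriv_eq_0[OF compactly_supported_C1_line_F] by simp
  next
    case False
    have "integral\<^sup>L lborel H
        = \<bar>m$j\<bar> * (\<integral>y. (\<integral>t. H (y + t *\<^sub>R axis j 1) \<partial>lborel) \<partial>hyperplane_measure m s)"
      using integral_lborel_lines[OF m _ _ H_bound, where v="axis j 1" and R=1 and c=s] H_supp False
      by (simp add: inner_axis)
    also have "(\<integral>y. (\<integral>t. H (y + t *\<^sub>R axis j 1) \<partial>lborel) \<partial>hyperplane_measure m s)
        = (\<integral>y. - sgn (m$j) * F y \<partial>hyperplane_measure m s)"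
    proof (rule integral_cong_AE)
      show "AE y in hyperplane_measure m s. (\<integral>t. H (y + t *\<^sub>R axis j 1) \<partial>lborel) = - sgn (m$j) * F y"
        using AE_hyperplane_measure[OF m, of s]
      proof eventually_elim
        fix y assume y: "m \<bullet> y = s"
        have "(\<integral>t. H (y + t *\<^sub>R axis j 1) \<partial>lborel)
            = (\<integral>t. indicator {t. 0 + m$j * t > 0} t * G (y + t *\<^sub>R axis j 1) \<partial>lborel)"
          by (rule Bochner_Integration.integral_cong)
            (auto simp: H_def indicator_def inner_add_right inner_axis y mult.commute)
        then show "(\<integral>t. H (y + t *\<^sub>R axis j 1) \<partial>lborel) = - sgn (m$j) * F y"
          using integral_half_line_deriv[OF compactly_supported_C1_line_F[of y] False, where A=0] by simp
      qed
    qed auto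
    finally show "integral\<^sup>L lborel H = - m$j * (\<integral>y. F y \<partial>hyperplane_measure m s)"
      by (simp add: abs_mult_sgn mult.assoc[symmetric])
  qed
qed

text \<open>Integrating by parts in direction \<open>i\<close> turns the ramp into the indicator of the half-space.\<close>
lemma integral_ramp_mult_second_partial:
  fixes m :: "real^'n"
  assumes m: "norm m = 1"
  shows "(LBINT x. max (m \<bullet> x - s) 0 * D x) = m$i * m$j * (\<integral>y. F y \<partial>hyperplane_measure m s)"
proof -
  define H where "H = (\<lambda>x. indicator {x. m \<bullet> x > s} x * G x)"
  obtain B where B: "\<And>x. \<bar>G x\<bar> \<le> B"
    using continuous_vanishing_outside_ball_bounded[OF cont_G supp_G] by blast
  have [measurable]: "H \<in> borel_measurable borel" unfolding H_def by measurable
  have H_bound: "\<bar>H x\<bar> \<le> B" for x using B[of x] by (auto simp: H_def indicator_def)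
  have H_supp: "1 < norm x \<Longrightarrow> H x = 0" for x using supp_G[of x] by (simp add: H_def)
  have "continuous_on UNIV (\<lambda>x. max (m \<bullet> x - s) 0 * D x)" by (intro continuous_intros cont_D)
  then obtain B' where B': "\<And>x. \<bar>max (m \<bullet> x - s) 0 * D x\<bar> \<le> B'"
    using continuous_vanishing_outside_ball_bounded supp_D by force
  have "(LBINT x. max (m \<bullet> x - s) 0 * D x)
      = (\<integral>y. (\<integral>t. max ((m \<bullet> y - s) + m$i * t) 0 * D (y + t *\<^sub>R axis i 1) \<partial>lborel)
          \<partial>hyperplane_measure (axis i 1) 0)"
    using integral_lborel_axis_lines[of "\<lambda>x. max (m \<bullet> x - s) 0 * D x" B' 1 i] B' supp_D
    by (simp add: inner_add_right inner_axis algebra_simps)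
  also have "\<dots> = (\<integral>y. - (m$i) * (\<integral>t. H (y + t *\<^sub>R axis i 1) \<partial>lborel) \<partial>hyperplane_measure (axis i 1) 0)"
  proof -
    have "(\<integral>t. indicator {t. (m \<bullet> y - s) + m$i * t > 0} t * G (y + t *\<^sub>R axis i 1) \<partial>lborel)
        = (\<integral>t. H (y + t *\<^sub>R axis i 1) \<partial>lborel)" for y
      by (rule Bochner_Integration.integral_cong)
        (auto simp: H_def indicator_def inner_add_right inner_axis algebra_simps)
    then show ?thesis
      by (simp add: integral_ramp_mult_deriv[OF compactly_supported_C1_line_G])
  qed
  also have "\<dots> = - (m$i) * integral\<^sup>L lborel H"
    using integral_lborel_axis_lines[of H B 1 i] H_bound H_supp by simp
  finally show ?thesis
    unfolding H_def integral_half_space_first_partial[OF m] by simp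
qed

lemma integral_affine_plus_ramp_mult_second_partial:
  fixes h :: "real^'n \<Rightarrow> real" and m a :: "real^'n"
  assumes m: "norm m = 1"
    and ramp: "\<And>x. x \<in> ball 0 1 \<Longrightarrow> h x = a \<bullet> x + b + \<beta> * max (m \<bullet> x - s) 0"
  shows "(LINT x : ball 0 1 | lborel. h x * D x) = \<beta> * (m$i * m$j * (\<integral>y. F y \<partial>hyperplane_measure m s))"
proof -
  have "(LINT x : ball 0 1 | lborel. h x * D x)
      = (LBINT x. (a \<bullet> x + b) * D x + \<beta> * (max (m \<bullet> x - s) 0 * D x))"
    unfolding set_lebesgue_integral_def
    by (rule Bochner_Integration.integral_cong[OF refl])
      (use ramp supp_D in \<open>auto simp: algebra_simps indicator_def\<close>)
  also have "\<dots> = (LBINT x. (a \<bullet> x + b) * D x) + \<beta> * (LBINT x. max (m \<bullet> x - s) 0 * D x)"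
    by (subst Bochner_Integration.integral_add)
      (auto intro!: integrable_continuous_vanishing_outside_ball continuous_intros cont_D simp: supp_D)
  finally show ?thesis
    by (simp add: integral_affine_mult_second_partial integral_ramp_mult_second_partial[OF m])
qed

end

definition kron :: "'n \<Rightarrow> 'n \<Rightarrow> real" where
  "kron a b = (if a = b then 1 else 0)"

definition defect :: "real^'n \<Rightarrow> real" where
  "defect y = 1 - y \<bullet> y"

text \<open>\<open>mm_coeff\<close> is \<open>mm_kernel (-d/2)\<close> on the ball; \<open>mm_kernel_d1 Q i j a\<close> and
  \<open>mm_kernel_d2 Q i j b a\<close> are the explicit partial derivatives \<open>\<partial>\<^sub>a\<close> and \<open>\<partial>\<^sub>b \<partial>\<^sub>a\<close> of
  \<open>mm_kernel Q i j\<close> there, each a rational function times \<open>defect\<^sup>Q\<close>.\<close>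
definition mm_kernel :: "real \<Rightarrow> 'n \<Rightarrow> 'n \<Rightarrow> real^'n \<Rightarrow> real" where
  "mm_kernel Q i j y = (kron i j - y$i * y$j) * defect y powr Q"

definition mm_kernel_d1_factor :: "real \<Rightarrow> 'n \<Rightarrow> 'n \<Rightarrow> 'n \<Rightarrow> real^'n \<Rightarrow> real" where
  "mm_kernel_d1_factor Q i j a y =
     -(kron a i * y$j + y$i * kron a j) + (kron i j - y$i*y$j) * (-2*Q*y$a) / defect y"

definition mm_kernel_d1 :: "real \<Rightarrow> 'n \<Rightarrow> 'n \<Rightarrow> 'n \<Rightarrow> real^'n \<Rightarrow> real" where
  "mm_kernel_d1 Q i j a y = mm_kernel_d1_factor Q i j a y * defect y powr Q"

definition mm_kernel_d2_factor :: "real \<Rightarrow> 'n \<Rightarrow> 'n \<Rightarrow> 'n \<Rightarrow> 'n \<Rightarrow> real^'n \<Rightarrow> real" where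
  "mm_kernel_d2_factor Q i j b a y = -(kron a i * kron b j + kron b i * kron a j)
     + (-(kron b i * y$j + y$i * kron b j)*(-2*Q*y$a) + (kron i j - y$i*y$j)*(-2*Q*kron b a)) / defect y
     + (kron i j - y$i*y$j)*(-2*Q*y$a)*(2*y$b) / (defect y)\<^sup>2"

definition mm_kernel_d2 :: "real \<Rightarrow> 'n \<Rightarrow> 'n \<Rightarrow> 'n \<Rightarrow> 'n \<Rightarrow> real^'n \<Rightarrow> real" where
  "mm_kernel_d2 Q i j b a y =
     (mm_kernel_d2_factor Q i j b a y + mm_kernel_d1_factor Q i j a y * (-2*Q*y$b) / defect y)
       * defect y powr Q"

lemma axis_line_component: "(y + t *\<^sub>R axis a 1)$i = y$i + t * kron a i"
  by (simp add: kron_def axis_def)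

lemma defect_axis_line: "defect (y + t *\<^sub>R axis a 1) = 1 - (y \<bullet> y + 2 * t * y$a + t\<^sup>2)"
  by (simp add: defect_def inner_add_left inner_add_right inner_axis inner_commute power2_eq_square algebra_simps)

lemma inner_self_eq_one_minus_defect: "y \<bullet> y = 1 - defect y"
  by (simp add: defect_def)

lemma mm_kernel_partial:
  fixes y :: "real^'n" and i j a :: 'n
  assumes "defect y > 0"
  shows "((\<lambda>t. mm_kernel Q i j (y + t *\<^sub>R axis a 1)) has_real_derivative mm_kernel_d1 Q i j a y) (at 0)"
proof -
  have e: "(\<lambda>t. mm_kernel Q i j (y + t *\<^sub>R axis a 1)) = (\<lambda>t.
      (kron i j - (y$i + t * kron a i) * (y$j + t * kron a j)) * (1 - (y \<bullet> y + 2 * t * y$a + t\<^sup>2)) powr Q)"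
    by (rule ext) (simp only: mm_kernel_def axis_line_component defect_axis_line)
  show ?thesis unfolding e
    apply (rule derivative_eq_intros refl | (use assms in \<open>simp add: defect_def\<close>; fail))+
    using assms by (simp add: mm_kernel_d1_def mm_kernel_d1_factor_def defect_def powr_diff field_simps)
qed

lemma mm_kernel_d1_partial:
  fixes y :: "real^'n" and i j a b :: 'n
  assumes "defect y > 0"
  shows "((\<lambda>t. mm_kernel_d1 Q i j a (y + t *\<^sub>R axis b 1)) has_real_derivative mm_kernel_d2 Q i j b a y) (at 0)"
proof -
  have e: "(\<lambda>t. mm_kernel_d1 Q i j a (y + t *\<^sub>R axis b 1)) = (\<lambda>t.
      (-(kron a i * (y$j + t * kron b j) + (y$i + t * kron b i) * kron a j)
        + (kron i j - (y$i + t * kron b i)*(y$j + t * kron b j)) * (-2*Q*(y$a + t * kron b a))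
          / (1 - (y \<bullet> y + 2 * t * y$b + t\<^sup>2)))
       * (1 - (y \<bullet> y + 2 * t * y$b + t\<^sup>2)) powr Q)"
    by (rule ext) (simp only: mm_kernel_d1_def mm_kernel_d1_factor_def axis_line_component defect_axis_line)
  show ?thesis unfolding e
    apply (rule derivative_eq_intros refl | (use assms in \<open>simp add: defect_def\<close>; fail))+
    using assms by (simp add: inner_self_eq_one_minus_defect mm_kernel_d2_def mm_kernel_d1_factor_def
        mm_kernel_d2_factor_def powr_diff field_simps power2_eq_square)
qed

lemma defect_pos: "y \<in> ball 0 1 \<Longrightarrow> defect y > 0"
  by (simp add: defect_def dot_square_norm abs_square_less_1)

lemma continuous_on_defect[continuous_intros]: "continuous_on S defect"
  unfolding defect_def by (intro continuous_intros)

lemma continuous_on_mm_kernel: "continuous_on (ball 0 1) (mm_kernel Q i j)"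
  unfolding mm_kernel_def by (intro continuous_intros) (auto dest: defect_pos)

lemma continuous_on_mm_kernel_d1: "continuous_on (ball 0 1) (mm_kernel_d1 Q i j a)"
  unfolding mm_kernel_d1_def mm_kernel_d1_factor_def by (intro continuous_intros) (auto dest: defect_pos)

lemma continuous_on_mm_kernel_d2: "continuous_on (ball 0 1) (mm_kernel_d2 Q i j b a)"
  unfolding mm_kernel_d2_def mm_kernel_d1_factor_def mm_kernel_d2_factor_def
  by (intro continuous_intros) (auto dest: defect_pos)

lemma mm_coeff_eq_mm_kernel:
  fixes y :: "real^'n"
  assumes "y \<in> ball 0 1"
  shows "mm_coeff i j y = mm_kernel (- real CARD('n) / 2) i j y"
proof -
  have r: "defect y > 0" using defect_pos[OF assms] .
  have L: "L y = sqrt (defect y)" by (simp add: L_def defect_def dot_square_norm)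
  have "(L y) ^ CARD('n) = defect y powr (real CARD('n) / 2)"
    using r by (simp add: L powr_half_sqrt[symmetric] powr_power)
  then show ?thesis
    by (simp add: mm_coeff_def mm_kernel_def kron_def powr_minus_divide divide_simps)
qed

lemma has_real_derivative_line_zero:
  fixes f :: "real^'n \<Rightarrow> real"
  assumes U: "open U" "x \<in> U" and z: "\<And>y. y \<in> U \<Longrightarrow> f y = 0"
  shows "((\<lambda>t. f (x + t *\<^sub>R e)) has_real_derivative 0) (at 0)"
proof (rule has_field_derivative_transform_within_open[where f="\<lambda>_. 0" and S="{t. x + t *\<^sub>R e \<in> U}"])
  show "open {t::real. x + t *\<^sub>R e \<in> U}"
    using U(1)
    by (intro open_Collect_less_Int continuous_open_vimage[of _ "\<lambda>t. x + t *\<^sub>R e", unfolded vimage_def])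
      (auto intro!: continuous_intros)
qed (use U z in auto)

lemma continuous_on_glue_zero:
  fixes f :: "real^'n \<Rightarrow> real"
  assumes f: "continuous_on (ball 0 1) f" and K: "closed K" "K \<subseteq> ball 0 1"
    and zero: "\<And>y. y \<notin> K \<Longrightarrow> f y = 0"
  shows "continuous_on UNIV f"
proof -
  have "continuous_on (- K) f"
    by (rule continuous_on_eq[where f="\<lambda>_. 0"]) (use zero in auto)
  then have "continuous_on (ball 0 1 \<union> - K) f"
    using K f by (intro continuous_on_open_Un) auto
  moreover have "ball 0 1 \<union> - K = UNIV" using K by auto
  ultimately show ?thesis by simp
qed

locale test_function =
  fixes \<phi> :: "real^'n \<Rightarrow> real"
  assumes tf: "test_fun \<phi>"
begin

definition supp_phi :: "(real^'n) set" where
  "supp_phi = closure {x. \<phi> x \<noteq> 0}"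

lemma supp_phi_in_ball: "compact supp_phi" "supp_phi \<subseteq> ball 0 1" "closed supp_phi"
  using tf by (auto simp: test_fun_def supp_phi_def)

lemma iter_partial_deriv:
  "((\<lambda>t. iter_partial is \<phi> (x + t *\<^sub>R axis i 1)) has_real_derivative iter_partial (i#is) \<phi> x) (at 0)"
proof -
  have "(\<lambda>t. iter_partial is \<phi> (x + t *\<^sub>R axis i 1)) differentiable (at 0)"
    using tf by (auto simp: test_fun_def smooth_fun_def)
  then show ?thesis
    by (simp add: DERIV_deriv_iff_real_differentiable[symmetric] partial_def)
qed

lemma continuous_on_iter_partial: "continuous_on UNIV (iter_partial is \<phi>)"
  using tf by (auto simp: test_fun_def smooth_fun_def)

lemma iter_partial_outside_support: "x \<notin> supp_phi \<Longrightarrow> iter_partial is \<phi> x = 0"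
proof (induction "is" arbitrary: x)
  case Nil
  then show ?case using closure_subset[of "{x. \<phi> x \<noteq> 0}"] by (auto simp: supp_phi_def)
next
  case (Cons i "is")
  have "((\<lambda>t. iter_partial is \<phi> (x + t *\<^sub>R axis i 1)) has_real_derivative 0) (at 0)"
    by (rule has_real_derivative_line_zero[where U="- supp_phi"]) (use supp_phi_in_ball Cons in auto)
  then show ?case by (simp add: partial_def DERIV_imp_deriv)
qed

definition weighted_test :: "'n \<Rightarrow> 'n \<Rightarrow> real^'n \<Rightarrow> real" where
  "weighted_test i j = (\<lambda>y. mm_coeff i j y * \<phi> y)"

definition weighted_test_d1 :: "'n \<Rightarrow> 'n \<Rightarrow> real^'n \<Rightarrow> real" where
  "weighted_test_d1 i j y = mm_kernel_d1 (- real CARD('n) / 2) i j j y * \<phi> y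
     + mm_kernel (- real CARD('n) / 2) i j y * iter_partial [j] \<phi> y"

definition weighted_test_d2 :: "'n \<Rightarrow> 'n \<Rightarrow> real^'n \<Rightarrow> real" where
  "weighted_test_d2 i j y = mm_kernel_d2 (- real CARD('n) / 2) i j i j y * \<phi> y
     + mm_kernel_d1 (- real CARD('n) / 2) i j j y * iter_partial [i] \<phi> y
     + mm_kernel_d1 (- real CARD('n) / 2) i j i y * iter_partial [j] \<phi> y
     + mm_kernel (- real CARD('n) / 2) i j y * iter_partial [i, j] \<phi> y"

lemma phi_outside_support: "x \<notin> supp_phi \<Longrightarrow> \<phi> x = 0"
  using iter_partial_outside_support[of x "[]"] by simp

lemma partials_outside_support:
  "x \<notin> supp_phi \<Longrightarrow> partial a \<phi> x = 0" "x \<notin> supp_phi \<Longrightarrow> partial a (partial b \<phi>) x = 0"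
  using iter_partial_outside_support[of x "[a]"] iter_partial_outside_support[of x "[a,b]"] by simp_all

lemma weighted_test_eq: "weighted_test i j = (\<lambda>y. mm_kernel (- real CARD('n) / 2) i j y * \<phi> y)"
proof
  fix y :: "real^'n"
  show "weighted_test i j y = mm_kernel (- real CARD('n) / 2) i j y * \<phi> y"
  proof (cases "y \<in> ball 0 1")
    case True then show ?thesis by (simp add: weighted_test_def mm_coeff_eq_mm_kernel)
  next
    case False then have "y \<notin> supp_phi" using supp_phi_in_ball by auto
    then show ?thesis by (simp add: weighted_test_def phi_outside_support)
  qed
qed

lemma outside_ball_outside_support: "x \<notin> ball 0 1 \<Longrightarrow> x \<notin> supp_phi"
  using supp_phi_in_ball by auto

lemma has_real_derivative_weighted_test:
  "((\<lambda>t. weighted_test i j (x + t *\<^sub>R axis j 1)) has_real_derivative weighted_test_d1 i j x) (at 0)"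
proof (cases "x \<in> ball 0 1")
  case True
  have "((\<lambda>t. mm_kernel (- real CARD('n) / 2) i j (x + t *\<^sub>R axis j 1) * iter_partial [] \<phi> (x + t *\<^sub>R axis j 1)) has_real_derivative
      mm_kernel_d1 (- real CARD('n) / 2) i j j x * iter_partial [] \<phi> (x + 0 *\<^sub>R axis j 1) + iter_partial [j] \<phi> x * mm_kernel (- real CARD('n) / 2) i j (x + 0 *\<^sub>R axis j 1)) (at 0)"
    by (rule DERIV_mult[OF mm_kernel_partial[OF defect_pos[OF True]] iter_partial_deriv])
  then show ?thesis by (simp add: weighted_test_eq weighted_test_d1_def mult.commute)
next
  case False
  then have xK: "x \<notin> supp_phi" by (rule outside_ball_outside_support)
  have "((\<lambda>t. weighted_test i j (x + t *\<^sub>R axis j 1)) has_real_derivative 0) (at 0)"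
    by (rule has_real_derivative_line_zero[where U="- supp_phi"])
      (use supp_phi_in_ball xK in \<open>auto simp: weighted_test_def phi_outside_support\<close>)
  moreover have "weighted_test_d1 i j x = 0"
    using xK by (simp add: weighted_test_d1_def partials_outside_support phi_outside_support)
  ultimately show ?thesis by simp
qed

lemma has_real_derivative_weighted_test_d1:
  "((\<lambda>t. weighted_test_d1 i j (x + t *\<^sub>R axis i 1)) has_real_derivative weighted_test_d2 i j x) (at 0)"
proof (cases "x \<in> ball 0 1")
  case True
  note r = defect_pos[OF True]
  have "((\<lambda>t. mm_kernel_d1 (- real CARD('n) / 2) i j j (x + t *\<^sub>R axis i 1) * iter_partial [] \<phi> (x + t *\<^sub>R axis i 1)
       + mm_kernel (- real CARD('n) / 2) i j (x + t *\<^sub>R axis i 1) * iter_partial [j] \<phi> (x + t *\<^sub>R axis i 1)) has_real_derivative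
      (mm_kernel_d2 (- real CARD('n) / 2) i j i j x * iter_partial [] \<phi> (x + 0 *\<^sub>R axis i 1) + iter_partial [i] \<phi> x * mm_kernel_d1 (- real CARD('n) / 2) i j j (x + 0 *\<^sub>R axis i 1))
    + (mm_kernel_d1 (- real CARD('n) / 2) i j i x * iter_partial [j] \<phi> (x + 0 *\<^sub>R axis i 1) + iter_partial [i, j] \<phi> x * mm_kernel (- real CARD('n) / 2) i j (x + 0 *\<^sub>R axis i 1))) (at 0)"
    by (rule DERIV_add[OF DERIV_mult[OF mm_kernel_d1_partial[OF r] iter_partial_deriv]
          DERIV_mult[OF mm_kernel_partial[OF r] iter_partial_deriv]])
  then show ?thesis by (simp add: weighted_test_d1_def weighted_test_d2_def mult.commute add.assoc)
next
  case False
  then have xK: "x \<notin> supp_phi" by (rule outside_ball_outside_support)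
  have "((\<lambda>t. weighted_test_d1 i j (x + t *\<^sub>R axis i 1)) has_real_derivative 0) (at 0)"
    by (rule has_real_derivative_line_zero[where U="- supp_phi"])
      (use supp_phi_in_ball xK in \<open>auto simp: weighted_test_d1_def partials_outside_support phi_outside_support\<close>)
  moreover have "weighted_test_d2 i j x = 0"
    using xK by (simp add: weighted_test_d2_def partials_outside_support phi_outside_support)
  ultimately show ?thesis by simp
qed

lemma continuous_on_iter_partial': "continuous_on S (iter_partial is \<phi>)"
  using continuous_on_iter_partial continuous_on_subset by blast

lemma continuous_on_weighted_test: "continuous_on UNIV (weighted_test i j)"
proof (rule continuous_on_glue_zero[OF _ supp_phi_in_ball(3) supp_phi_in_ball(2)])
  have "continuous_on (ball 0 1) (\<lambda>y. mm_kernel (- real CARD('n) / 2) i j y * iter_partial [] \<phi> y)"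
    by (intro continuous_intros continuous_on_mm_kernel continuous_on_iter_partial')
  then show "continuous_on (ball 0 1) (weighted_test i j)" by (simp add: weighted_test_eq)
qed (simp add: weighted_test_def phi_outside_support)

lemma continuous_on_weighted_test_d1: "continuous_on UNIV (weighted_test_d1 i j)"
proof (rule continuous_on_glue_zero[OF _ supp_phi_in_ball(3) supp_phi_in_ball(2)])
  show "continuous_on (ball 0 1) (weighted_test_d1 i j)"
    unfolding weighted_test_d1_def using continuous_on_iter_partial'[of _ "[]"]
    by (intro continuous_intros continuous_on_mm_kernel continuous_on_mm_kernel_d1
        continuous_on_iter_partial') simp
qed (simp add: weighted_test_d1_def partials_outside_support phi_outside_support)

lemma continuous_on_weighted_test_d2: "continuous_on UNIV (weighted_test_d2 i j)"
proof (rule continuous_on_glue_zero[OF _ supp_phi_in_ball(3) supp_phi_in_ball(2)])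
  show "continuous_on (ball 0 1) (weighted_test_d2 i j)"
    unfolding weighted_test_d2_def using continuous_on_iter_partial'[of _ "[]"]
    by (intro continuous_intros continuous_on_mm_kernel continuous_on_mm_kernel_d1
        continuous_on_mm_kernel_d2 continuous_on_iter_partial') simp
qed (simp add: weighted_test_d2_def partials_outside_support phi_outside_support)

lemma partial_weighted_test: "partial j (weighted_test i j) = weighted_test_d1 i j"
  by (rule ext) (simp add: partial_def DERIV_imp_deriv[OF has_real_derivative_weighted_test])

lemma iter_partial_mm_coeff_mult: "iter_partial [i, j] (\<lambda>y. mm_coeff i j y * \<phi> y) = weighted_test_d2 i j"
proof -
  have "iter_partial [i, j] (\<lambda>y. mm_coeff i j y * \<phi> y) = partial i (partial j (weighted_test i j))"
    by (simp add: weighted_test_def)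
  also have "\<dots> = partial i (weighted_test_d1 i j)" by (simp add: partial_weighted_test)
  also have "\<dots> = weighted_test_d2 i j"
    by (rule ext) (simp add: partial_def DERIV_imp_deriv[OF has_real_derivative_weighted_test_d1])
  finally show ?thesis .
qed

lemma weighted_test_vanishing_outside_ball:
  assumes "1 \<le> norm x"
  shows "weighted_test i j x = 0" "weighted_test_d1 i j x = 0" "weighted_test_d2 i j x = 0"
proof -
  have "x \<notin> supp_phi" using assms supp_phi_in_ball by auto
  then show "weighted_test i j x = 0" "weighted_test_d1 i j x = 0" "weighted_test_d2 i j x = 0"
    by (simp_all add: weighted_test_def weighted_test_d1_def weighted_test_d2_def
        partials_outside_support phi_outside_support)
qed

lemma second_partial_in_ball_weighted_test:
  "second_partial_in_ball (weighted_test i j) (weighted_test_d1 i j) (weighted_test_d2 i j) i j"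
  by unfold_locales
    (auto intro: has_real_derivative_weighted_test has_real_derivative_weighted_test_d1
      continuous_on_weighted_test continuous_on_weighted_test_d1 continuous_on_weighted_test_d2
      weighted_test_vanishing_outside_ball)

end

definition ramp_weight :: "real \<Rightarrow> real^'n \<Rightarrow> real^'n \<Rightarrow> real" where
  "ramp_weight \<beta> m x = \<beta> * indicator (ball 0 1) x * (1 - (m \<bullet> x)\<^sup>2) / L x ^ CARD('n)"

lemma L_pos: "x \<in> ball 0 1 \<Longrightarrow> L x > 0"
  by (simp add: L_def abs_square_less_1)

lemma ramp_weight_nonneg:
  fixes m :: "real^'n"
  assumes "norm m = 1" "\<beta> \<ge> 0"
  shows "ramp_weight \<beta> m x \<ge> 0"
proof (cases "x \<in> ball 0 1")
  case True
  have "\<bar>m \<bullet> x\<bar> \<le> 1"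
    using Cauchy_Schwarz_ineq2[of m x] True assms(1) by simp
  then have "(m \<bullet> x)\<^sup>2 \<le> 1" by (simp add: abs_le_square_iff[of _ 1, simplified])
  then show ?thesis using True assms(2) L_pos[OF True] by (simp add: ramp_weight_def)
qed (simp add: ramp_weight_def)

lemma continuous_on_ramp_weight:
  fixes m :: "real^'n"
  shows "continuous_on (ball 0 1) (ramp_weight \<beta> m)"
proof -
  have "continuous_on (ball 0 1) (\<lambda>x::real^'n. \<beta> * (1 - (m \<bullet> x)\<^sup>2) / L x ^ CARD('n))"
    unfolding L_def by (intro continuous_intros) (auto simp: abs_square_less_1 abs_square_eq_1)
  then show ?thesis
    by (rule continuous_on_eq) (simp add: ramp_weight_def)
qed

lemma borel_measurable_ramp_weight [measurable]:
  fixes m :: "real^'n"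
  shows "ramp_weight \<beta> m \<in> borel_measurable borel"
proof -
  have "(\<lambda>x. indicator (ball 0 1) x *\<^sub>R ramp_weight \<beta> m x) \<in> borel_measurable borel"
    by (rule borel_measurable_continuous_on_indicator[OF _ continuous_on_ramp_weight]) simp
  moreover have "(\<lambda>x. indicator (ball 0 1) x *\<^sub>R ramp_weight \<beta> m x) = ramp_weight \<beta> m"
    by (auto simp: ramp_weight_def indicator_def)
  ultimately show ?thesis by simp
qed

lemma sum_outer_mm_coeff:
  fixes m y :: "real^'n"
  assumes m: "norm m = 1"
  shows "(\<Sum>i\<in>UNIV. \<Sum>j\<in>UNIV. m$i * m$j * mm_coeff i j y) = (1 - (m \<bullet> y)\<^sup>2) / L y ^ CARD('n)"
proof -
  have "(\<Sum>i\<in>UNIV. \<Sum>j\<in>UNIV. m$i * m$j * mm_coeff i j y)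
      = ((\<Sum>i\<in>UNIV. \<Sum>j\<in>UNIV. m$i * m$j * (if i = j then 1 else 0))
          - (\<Sum>i\<in>UNIV. \<Sum>j\<in>UNIV. (m$i * y$i) * (m$j * y$j))) / L y ^ CARD('n)"
    by (simp add: mm_coeff_def sum_divide_distrib sum_subtractf[symmetric] algebra_simps diff_divide_distrib)
  also have "(\<Sum>i\<in>UNIV. \<Sum>j\<in>UNIV. m$i * m$j * (if i = j then 1 else 0)) = m \<bullet> m"
    by (simp add: inner_vec_def if_distrib[where f="\<lambda>z. _ * z"] cong: if_cong)
  also have "(\<Sum>i\<in>UNIV. \<Sum>j\<in>UNIV. (m$i * y$i) * (m$j * y$j)) = (m \<bullet> y)\<^sup>2"
    by (simp add: inner_vec_def power2_eq_square sum_product)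
  finally show ?thesis using m by (simp add: dot_square_norm)
qed

lemma (in test_function) integrable_ramp_weight_mult:
  assumes m: "norm m = 1"
  shows "integrable (hyperplane_measure m s) (\<lambda>y. ramp_weight \<beta> m y * \<phi> y)"
proof -
  have cont: "continuous_on UNIV (\<lambda>y. ramp_weight \<beta> m y * \<phi> y)"
  proof (rule continuous_on_glue_zero[OF _ supp_phi_in_ball(3,2)])
    show "continuous_on (ball 0 1) (\<lambda>y. ramp_weight \<beta> m y * \<phi> y)"
      using continuous_on_iter_partial'[of _ "[]"]
      by (intro continuous_intros continuous_on_ramp_weight) simp
  qed (simp add: phi_outside_support)
  have supp: "1 \<le> norm x \<Longrightarrow> ramp_weight \<beta> m x * \<phi> x = 0" for x
    by (simp add: ramp_weight_def)
  obtain B where "\<And>x. \<bar>ramp_weight \<beta> m x * \<phi> x\<bar> \<le> B"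
    using continuous_vanishing_outside_ball_bounded[OF cont supp] by blast
  then show ?thesis
    using cont supp
    by (intro integrable_hyperplane_measure[OF m, where R=1]) (auto intro: borel_measurable_continuous_onI)
qed

lemma (in test_function) integrable_weighted_test:
  assumes m: "norm m = 1"
  shows "integrable (hyperplane_measure m s) (weighted_test i j)"
proof -
  interpret second_partial_in_ball "weighted_test i j" "weighted_test_d1 i j" "weighted_test_d2 i j" i j
    by (rule second_partial_in_ball_weighted_test)
  obtain B where "\<And>x. \<bar>weighted_test i j x\<bar> \<le> B"
    using continuous_vanishing_outside_ball_bounded[OF cont_F supp_F] by blast
  then show ?thesis
    by (intro integrable_hyperplane_measure[OF m _ _ supp_F, where R=1]) auto
qed

text \<open>Integrating by parts twice moves \<open>\<partial>\<^sub>i \<partial>\<^sub>j\<close> onto \<open>h\<close>; the affine part is annihilated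
  and the ramp contributes \<open>m\<^sub>i m\<^sub>j\<close> times the restriction of \<open>mm_coeff i j \<phi>\<close> to the hyperplane.\<close>
lemma mm_pairing_affine_plus_ramp:
  fixes h :: "real^'n \<Rightarrow> real" and m a :: "real^'n"
  assumes m: "norm m = 1"
    and ramp: "\<And>x. x \<in> ball 0 1 \<Longrightarrow> h x = a \<bullet> x + b + \<beta> * max (m \<bullet> x - s) 0"
    and \<phi>: "test_fun \<phi>"
  shows "mm_pairing h \<phi> = (\<integral>y. ramp_weight \<beta> m y * \<phi> y \<partial>hyperplane_measure m s)"
proof -
  interpret test_function \<phi> by (rule test_function.intro[OF \<phi>])
  have term_ij: "(LINT x : ball 0 1 | lborel. h x * iter_partial [i, j] (\<lambda>y. mm_coeff i j y * \<phi> y) x)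
      = \<beta> * (m$i * m$j * (\<integral>y. weighted_test i j y \<partial>hyperplane_measure m s))" for i j
  proof -
    interpret second_partial_in_ball "weighted_test i j" "weighted_test_d1 i j" "weighted_test_d2 i j" i j
      by (rule second_partial_in_ball_weighted_test)
    show ?thesis
      unfolding iter_partial_mm_coeff_mult by (rule integral_affine_plus_ramp_mult_second_partial[OF m ramp])
  qed
  have "mm_pairing h \<phi>
      = \<beta> * (\<integral>y. (\<Sum>i\<in>UNIV. \<Sum>j\<in>UNIV. m$i * m$j * weighted_test i j y) \<partial>hyperplane_measure m s)"
    unfolding mm_pairing_def term_ij
    by (simp add: Bochner_Integration.integral_sum integrable_weighted_test[OF m] sum_distrib_left)
  also have "\<dots> = (\<integral>y. ramp_weight \<beta> m y * \<phi> y \<partial>hyperplane_measure m s)"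
  proof -
    have "\<beta> * (\<Sum>i\<in>UNIV. \<Sum>j\<in>UNIV. m$i * m$j * weighted_test i j y) = ramp_weight \<beta> m y * \<phi> y" for y
    proof (cases "y \<in> ball 0 1")
      case True
      have "(\<Sum>i\<in>UNIV. \<Sum>j\<in>UNIV. m$i * m$j * weighted_test i j y)
          = (\<Sum>i\<in>UNIV. \<Sum>j\<in>UNIV. m$i * m$j * mm_coeff i j y) * \<phi> y"
        by (simp add: weighted_test_def sum_distrib_right mult.assoc)
      then show ?thesis
        using True by (simp add: sum_outer_mm_coeff[OF m] ramp_weight_def)
    next
      case False
      then show ?thesis
        using weighted_test_vanishing_outside_ball(1) by (simp add: ramp_weight_def)
    qed
    then show ?thesis
      by (simp flip: integral_mult_right_zero)
  qed
  finally show ?thesis .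
qed

lemma emeasure_density_compact_finite:
  fixes f :: "'a::euclidean_space \<Rightarrow> real"
  assumes sets_M: "sets M = sets borel" and M_finite: "\<And>K. compact K \<Longrightarrow> emeasure M K < \<infinity>"
    and f_meas: "f \<in> borel_measurable borel" and f: "continuous_on S f"
    and K: "compact K" "K \<subseteq> S"
  shows "emeasure (density M (\<lambda>x. ennreal (f x))) K < \<infinity>"
proof -
  have f_meas_M: "f \<in> borel_measurable M"
    using f_meas by (simp add: measurable_cong_sets[OF sets_M refl])
  have K_sets: "K \<in> sets M" using K(1) sets_M by (simp add: compact_imp_closed)
  have "compact (f ` K)" using K by (intro compact_continuous_image continuous_on_subset[OF f])
  then obtain C where "\<forall>y\<in>f ` K. norm y \<le> C"
    using compact_imp_bounded bounded_iff by blast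
  then have C: "f x \<le> C" if "x \<in> K" for x using that by auto
  have "emeasure (density M (\<lambda>x. ennreal (f x))) K = (\<integral>\<^sup>+x. ennreal (f x) * indicator K x \<partial>M)"
    using f_meas_M K_sets by (rule emeasure_density[OF measurable_compose[OF _ measurable_ennreal]])
  also have "\<dots> \<le> (\<integral>\<^sup>+x. ennreal C * indicator K x \<partial>M)"
    using C by (intro nn_integral_mono) (simp add: indicator_def ennreal_leI)
  also have "\<dots> = ennreal C * emeasure M K"
    using K_sets by (rule nn_integral_cmult_indicator)
  also have "\<dots> < \<infinity>"
    using M_finite[OF K(1)] by (simp add: ennreal_mult_less_top)
  finally show ?thesis .
qed

lemma is_MM_affine_plus_ramp:
  fixes h :: "real^'n \<Rightarrow> real" and m a :: "real^'n"
  assumes m: "norm m = 1" and \<beta>: "\<beta> \<ge> 0"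
    and ramp: "\<And>x. x \<in> ball 0 1 \<Longrightarrow> h x = a \<bullet> x + b + \<beta> * max (m \<bullet> x - s) 0"
  shows "is_MM h (density (hyperplane_measure m s) (\<lambda>x. ennreal (ramp_weight \<beta> m x)))"
proof -
  let ?\<mu> = "density (hyperplane_measure m s) (\<lambda>x. ennreal (ramp_weight \<beta> m x))"
  have "emeasure ?\<mu> (- ball 0 1)
      = (\<integral>\<^sup>+x. ennreal (ramp_weight \<beta> m x) * indicator (- ball 0 1) x \<partial>hyperplane_measure m s)"
    by (subst emeasure_density) auto
  also have "\<dots> = (\<integral>\<^sup>+x. 0 \<partial>hyperplane_measure m s)"
    by (rule nn_integral_cong) (simp add: ramp_weight_def indicator_def)
  finally have outside_ball: "emeasure ?\<mu> (- ball 0 1) = 0" by simp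
  have "emeasure (hyperplane_measure m s) K < \<infinity>" if "compact K" for K
    using that by (intro emeasure_hyperplane_measure_bounded_finite[OF m] compact_imp_bounded
        borel_closed compact_imp_closed)
  then have locally_finite: "emeasure ?\<mu> K < \<infinity>" if "compact K" "K \<subseteq> ball 0 1" for K
    using that by (intro emeasure_density_compact_finite[OF _ _ _ continuous_on_ramp_weight]) auto
  have represents: "integrable ?\<mu> \<phi> \<and> integral\<^sup>L ?\<mu> \<phi> = mm_pairing h \<phi>" if \<phi>: "test_fun \<phi>" for \<phi>
  proof -
    interpret test_function \<phi> by (rule test_function.intro[OF \<phi>])
    have [measurable]: "\<phi> \<in> borel_measurable borel"
      using continuous_on_iter_partial[of "[]"] by (auto intro: borel_measurable_continuous_onI)
    have "integrable ?\<mu> \<phi>"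
      using integrable_ramp_weight_mult[OF m] ramp_weight_nonneg[OF m \<beta>]
      by (subst integrable_density) auto
    moreover have "integral\<^sup>L ?\<mu> \<phi> = (\<integral>y. ramp_weight \<beta> m y * \<phi> y \<partial>hyperplane_measure m s)"
      using ramp_weight_nonneg[OF m \<beta>] by (subst integral_density) auto
    ultimately show ?thesis
      using mm_pairing_affine_plus_ramp[OF m ramp \<phi>] by simp
  qed
  show ?thesis
    unfolding is_MM_def
  proof (intro conjI)
    show "sets ?\<mu> = sets borel" by simp
    show "emeasure ?\<mu> (- ball 0 1) = 0" by (rule outside_ball)
    show "\<forall>K. compact K \<and> K \<subseteq> ball 0 1 \<longrightarrow> emeasure ?\<mu> K < \<infinity>"
      using locally_finite by blast
    show "\<forall>\<phi>. test_fun \<phi> \<longrightarrow> integrable ?\<mu> \<phi> \<and> integral\<^sup>L ?\<mu> \<phi> = mm_pairing h \<phi>"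
      by (intro allI impI represents)
  qed
qed

lemma scale_measure_density:
  assumes "f \<in> borel_measurable M"
  shows "scale_measure (ennreal r) (density M f) = density M (\<lambda>x. ennreal r * f x)"
proof (rule measure_eqI)
  fix A assume "A \<in> sets (scale_measure (ennreal r) (density M f))"
  then have A: "A \<in> sets M" by simp
  have "emeasure (scale_measure (ennreal r) (density M f)) A = ennreal r * (\<integral>\<^sup>+x. f x * indicator A x \<partial>M)"
    using A assms by (simp add: emeasure_density)
  also have "\<dots> = (\<integral>\<^sup>+x. ennreal r * f x * indicator A x \<partial>M)"
    using A assms by (subst nn_integral_cmult[symmetric]) (auto simp: mult.assoc)
  finally show "emeasure (scale_measure (ennreal r) (density M f)) A = emeasure (density M (\<lambda>x. ennreal r * f x)) A"
    using A assms by (simp add: emeasure_density)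
qed simp

lemma hsec_normal_form:
  fixes u :: "real^'n"
  assumes u: "u \<noteq> 0" and ne: "hsec u c \<noteq> {}"
  shows "norm (hsec_n u c) = 1" "hsec_n u c \<bullet> hsec_p u c = norm (hsec_p u c)"
    "norm (hsec_p u c) < 1" "hsec u c = ball 0 1 \<inter> {x. hsec_n u c \<bullet> x = hsec_n u c \<bullet> hsec_p u c}"
proof -
  define nu where "nu = norm u"
  have nu: "nu > 0" using u by (simp add: nu_def)
  have norm_p: "norm (hsec_p u c) = \<bar>c\<bar> / nu"
    using nu by (simp add: hsec_p_def nu_def power2_eq_square)
  obtain x where "x \<in> hsec u c" using ne by blast
  then have x: "norm x < 1" "u \<bullet> x = c" by (auto simp: hsec_def)
  have "\<bar>c\<bar> \<le> nu * norm x" using Cauchy_Schwarz_ineq2[of u x] x by (simp add: nu_def)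
  also have "\<dots> < nu" using x nu by simp
  finally show "norm (hsec_p u c) < 1" using nu norm_p by simp
  have "norm (hsec_n u c) = 1 \<and> hsec_n u c \<bullet> hsec_p u c = norm (hsec_p u c) \<and>
     (\<forall>x. u \<bullet> x = c \<longleftrightarrow> hsec_n u c \<bullet> x = hsec_n u c \<bullet> hsec_p u c)"
  proof (cases "c = 0")
    case True
    then show ?thesis using nu by (auto simp: hsec_n_def hsec_p_def nu_def)
  next
    case False
    have p_nonzero: "hsec_p u c \<noteq> 0" using False u by (simp add: hsec_p_def)
    have n_unit: "norm (hsec_n u c) = 1" using False p_nonzero by (simp add: hsec_n_def)
    have n_p: "hsec_n u c \<bullet> hsec_p u c = norm (hsec_p u c)"
      using False p_nonzero by (simp add: hsec_n_def dot_square_norm power2_eq_square)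
    have n_y: "hsec_n u c \<bullet> y = (c / \<bar>c\<bar>) * (u \<bullet> y) / nu" for y
      using False nu norm_p by (simp add: hsec_n_def hsec_p_def nu_def power2_eq_square field_simps)
    have "u \<bullet> y = c \<longleftrightarrow> hsec_n u c \<bullet> y = hsec_n u c \<bullet> hsec_p u c" for y
    proof -
      have "hsec_n u c \<bullet> y = hsec_n u c \<bullet> hsec_p u c \<longleftrightarrow> (c / \<bar>c\<bar>) * (u \<bullet> y) / nu = \<bar>c\<bar> / nu"
        using n_p norm_p n_y by simp
      also have "\<dots> \<longleftrightarrow> u \<bullet> y = c"
        using False nu by (cases "c > 0") (auto simp: field_simps)
      finally show ?thesis by simp
    qed
    then show ?thesis using n_unit n_p by blast
  qed
  then show "norm (hsec_n u c) = 1" "hsec_n u c \<bullet> hsec_p u c = norm (hsec_p u c)"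
    "hsec u c = ball 0 1 \<inter> {x. hsec_n u c \<bullet> x = hsec_n u c \<bullet> hsec_p u c}"
    by (auto simp: hsec_def)
qed

lemma is_wedge_affine_plus_ramp:
  assumes "is_wedge u c h hm hp \<alpha>"
  obtains a b where "\<And>x. x \<in> ball 0 1 \<Longrightarrow>
    h x = a \<bullet> x + b + \<alpha> / L (hsec_p u c) * max (hsec_n u c \<bullet> x - hsec_n u c \<bullet> hsec_p u c) 0"
proof -
  define s where "s = hsec_n u c \<bullet> hsec_p u c"
  obtain a b where hm: "\<And>x. hm x = a \<bullet> x + b"
    using assms by (auto simp: is_wedge_def affine_fun_def)
  have canon: "hsec_canon u c x = (hsec_n u c \<bullet> x - s) / L (hsec_p u c)" for x
    by (simp add: hsec_canon_def s_def inner_diff_right inner_commute)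
  have "h x = a \<bullet> x + b + \<alpha> / L (hsec_p u c) * max (hsec_n u c \<bullet> x - s) 0" if x: "x \<in> ball 0 1" for x
  proof -
    have "h x = hm x + (hp x - hm x) * indicator (hsec_plus u c) x"
      using assms x by (auto simp: is_wedge_def)
    also have "hp x - hm x = \<alpha> * ((hsec_n u c \<bullet> x - s) / L (hsec_p u c))"
      using assms x by (auto simp: is_wedge_def canon)
    finally show ?thesis
      using x by (auto simp: hm hsec_plus_def s_def indicator_def max_def)
  qed
  then show ?thesis using that by (simp add: s_def)
qed

lemma omega_eq_density:
  fixes u :: "real^'n"
  assumes u: "u \<noteq> 0" "hsec u c \<noteq> {}"
  shows "omega u c = density (hyperplane_measure (hsec_n u c) (hsec_n u c \<bullet> hsec_p u c))
    (\<lambda>x. indicator (hsec u c) x * ennreal (L (hsec_p u c) / L x ^ CARD('n)))"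
proof -
  define n where "n = hsec_n u c"
  define s where "s = n \<bullet> hsec_p u c"
  note normal_form = hsec_normal_form[OF u, folded n_def, folded s_def]
  have "indicator (hsec u c) x * ennreal (induced_vol_density n x)
      = indicator (hsec u c) x * ennreal (L (hsec_p u c) / L x ^ CARD('n))" for x
  proof (cases "x \<in> hsec u c")
    case True
    then have "n \<bullet> x = s" "norm x < 1" by (auto simp: normal_form(4))
    then have "induced_vol_density n x = sqrt (1 - s\<^sup>2) / L x ^ CARD('n)"
      by (rule induced_vol_density_eq[OF normal_form(1)])
    then show ?thesis by (simp add: L_def normal_form(2))
  qed simp
  then show ?thesis by (simp add: omega_def n_def s_def)
qed

text \<open>With \<open>s = n \<bullet> p\<close> the distance of the hyperplane from the origin, the canonical map is
  normalised by \<open>L p = \<surd>(1 - s\<^sup>2)\<close>, so \<open>\<alpha> L p / L\<^sup>d = (\<alpha> / L p) (1 - s\<^sup>2) / L\<^sup>d\<close>.\<close>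
lemma scale_omega_eq_density_ramp_weight:
  fixes u :: "real^'n"
  assumes u: "u \<noteq> 0" "hsec u c \<noteq> {}" and \<alpha>: "\<alpha> \<ge> 0"
  shows "scale_measure (ennreal \<alpha>) (omega u c)
    = density (hyperplane_measure (hsec_n u c) (hsec_n u c \<bullet> hsec_p u c))
        (\<lambda>x. ennreal (ramp_weight (\<alpha> / L (hsec_p u c)) (hsec_n u c) x))"
proof -
  define n where "n = hsec_n u c"
  define p where "p = hsec_p u c"
  define s where "s = n \<bullet> p"
  define q where "q = L p"
  note normal_form = hsec_normal_form[OF u, folded n_def p_def, folded s_def]
  have q_pos: "q > 0" using normal_form(3) by (simp add: q_def L_def abs_square_less_1)
  have "q\<^sup>2 = 1 - s\<^sup>2"
    using normal_form(2,3) by (simp add: q_def L_def abs_square_less_1 less_imp_le)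
  then have "\<alpha> / q * (1 - s\<^sup>2) = \<alpha> / q * q\<^sup>2" by simp
  also have "\<dots> = \<alpha> * q" using q_pos by (simp add: power2_eq_square)
  finally have weight_eq: "\<alpha> / q * (1 - s\<^sup>2) = \<alpha> * q" .
  have [measurable]: "hsec u c \<in> sets borel" unfolding normal_form(4) by measurable
  have [measurable]: "L \<in> borel_measurable borel" unfolding L_def[abs_def] by measurable
  have "scale_measure (ennreal \<alpha>) (omega u c)
      = density (hyperplane_measure n s) (\<lambda>x. ennreal \<alpha> * (indicator (hsec u c) x * ennreal (q / L x ^ CARD('n))))"
    unfolding omega_eq_density[OF u] n_def p_def s_def q_def
    by (rule scale_measure_density) measurable
  also have "\<dots> = density (hyperplane_measure n s) (\<lambda>x. ennreal (ramp_weight (\<alpha> / q) n x))"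
  proof (rule density_cong)
    show "AE x in hyperplane_measure n s.
        ennreal \<alpha> * (indicator (hsec u c) x * ennreal (q / L x ^ CARD('n))) = ennreal (ramp_weight (\<alpha> / q) n x)"
      using AE_hyperplane_measure[OF normal_form(1), of s]
    proof eventually_elim
      fix x assume x: "n \<bullet> x = s"
      show "ennreal \<alpha> * (indicator (hsec u c) x * ennreal (q / L x ^ CARD('n))) = ennreal (ramp_weight (\<alpha> / q) n x)"
      proof (cases "x \<in> ball 0 1")
        case True
        have "ramp_weight (\<alpha> / q) n x = \<alpha> / q * (1 - s\<^sup>2) / L x ^ CARD('n)"
          using True x by (simp add: ramp_weight_def)
        also have "\<dots> = \<alpha> * q / L x ^ CARD('n)" unfolding weight_eq ..
        finally show ?thesis
          using True x \<alpha> q_pos L_pos[OF True] by (simp add: normal_form(4) ennreal_mult[symmetric])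
      qed (simp add: normal_form(4) ramp_weight_def)
    qed
  qed measurable
  finally show ?thesis by (simp add: n_def p_def s_def q_def)
qed

theorem lemma2p19:
  fixes u :: "real^'n" and c :: real and h hm hp :: "real^'n \<Rightarrow> real" and \<alpha> :: real
  assumes "u \<noteq> 0"
    and "hsec u c \<noteq> {}"
    and "is_wedge u c h hm hp \<alpha>"
    and "\<alpha> > 0"
  shows "is_MM h (scale_measure (ennreal \<alpha>) (omega u c))"
proof -
  obtain a b where ramp: "\<And>x. x \<in> ball 0 1 \<Longrightarrow>
      h x = a \<bullet> x + b + \<alpha> / L (hsec_p u c) * max (hsec_n u c \<bullet> x - hsec_n u c \<bullet> hsec_p u c) 0"
    using is_wedge_affine_plus_ramp[OF assms(3)] by blast
  have nonneg: "\<alpha> / L (hsec_p u c) \<ge> 0"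
    using assms(4) L_pos[of "hsec_p u c"] hsec_normal_form(3)[OF assms(1,2)] by simp
  have "scale_measure (ennreal \<alpha>) (omega u c)
      = density (hyperplane_measure (hsec_n u c) (hsec_n u c \<bullet> hsec_p u c))
          (\<lambda>x. ennreal (ramp_weight (\<alpha> / L (hsec_p u c)) (hsec_n u c) x))"
    using assms(4) by (intro scale_omega_eq_density_ramp_weight[OF assms(1,2)]) simp
  moreover have "is_MM h (density (hyperplane_measure (hsec_n u c) (hsec_n u c \<bullet> hsec_p u c))
      (\<lambda>x. ennreal (ramp_weight (\<alpha> / L (hsec_p u c)) (hsec_n u c) x)))"
    by (rule is_MM_affine_plus_ramp[OF hsec_normal_form(1)[OF assms(1,2)] nonneg ramp])
  ultimately show ?thesis by (simp only:)
qed

end
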